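(* Let $( f_u )_{u \in [u_1, u_2]}$ be a continuous strictly increasing family of circle homeomorphisms of the type $f_{\ell, \alpha, \theta}$, with $\rho_1 := \rho(f_{u_1}) < \rho_2 := \rho(f_{u_2})$. Here $\rho(f_u)$ is intended as the actual value of $\lim_{n\to\infty}(F_u^n(x)-x)/n$; in other words, $\rho(f_u)$ can take all real values. Then the function $\rho: [u_1, u_2] \to \mathbb{R}$, $\rho(u) := \rho(f_u)$, is an increasing devil's staircase (namely, an increasing, continuous, non-constant function that is constant on each interval of a family with dense union). This implies in particular that each rotation number in $[\rho_1, \rho_2]$ is realized by at least one $f_u$. Moreover, $\rho$ is constant on an interval if, and only if, the constant is $0$ or $p/q$, with $p,q$ coprime integers and $q$ odd.
   Context: Setting: $f_{\ell,\alpha,\theta}:\mathbb{T}\to\mathbb{T}$ ($\mathbb{T}=\mathbb{R}/\mathbb{Z}$) is the first-return map to a horizontal cross-section of length 1 of the unfolded unit-speed linear flow of the internal-wave billiard (reflection preserving angles with the vertical) in a rectangular trapezoid of height $1/2$, vertical left leg, shorter base $\ell>0$, slanted-leg angle $\alpha$, initial direction $\theta$ with $\alpha<\theta<\pi/2$; it is a piecewise-linear orientation-preserving circle homeomorphism with slopes $\Lambda^{\pm1}$, $\Lambda=\sin(\theta+\alpha)/\sin(\theta-\alpha)$, and two break points $a_0,a_1$ satisfying $f(a_j)=-a_j$. A family $(f_u)_{u\in[u_1,u_2]}$ of such maps is continuous strictly increasing if there are lifts $F_u:\mathbb{R}\to\mathbb{R}$ with $u\mapsto F_u$ continuous in sup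 norm and $u\mapsto F_u(x)$ strictly increasing for each $x$ (equivalently, the coordinates of the two break points are continuous strictly decreasing functions of $u$); examples are varying $\ell$, or varying $-\theta$, with the other parameters fixed. *)

theory Defs
  imports "HOL-Analysis.Analysis"
begin

definition trap_slope :: "real \<Rightarrow> real \<Rightarrow> real" where
  "trap_slope \<alpha> \<theta> = sin (\<theta> + \<alpha>) / sin (\<theta> - \<alpha>)"

text \<open>F is a lift of a map of the type f_{l,alpha,theta}: a piecewise-linear
  orientation-preserving circle homeomorphism with slopes Lambda on [a0,a1] and
  1/Lambda on [a1,a0+1] (extended 1-periodically: F(x+1) = F(x)+1), whose two
  break points satisfy f(a_j) = -a_j on the circle, i.e. F(a_j) + a_j is an integer.\<close>
definition trap_lift :: "(real \<Rightarrow> real) \<Rightarrow> bool" where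
  "trap_lift F \<longleftrightarrow>
    (\<exists>\<alpha> \<theta> a0 a1. 0 < \<alpha> \<and> \<alpha> < \<theta> \<and> \<theta> < pi / 2 \<and>
       a0 < a1 \<and> a1 < a0 + 1 \<and>
       (\<forall>x. F (x + 1) = F x + 1) \<and>
       (\<forall>x\<in>{a0..a1}. F x = F a0 + trap_slope \<alpha> \<theta> * (x - a0)) \<and>
       (\<forall>x\<in>{a1..a0+1}. F x = F a1 + (x - a1) / trap_slope \<alpha> \<theta>) \<and>
       F a0 + a0 \<in> \<int> \<and> F a1 + a1 \<in> \<int>)"

definition rotnum :: "(real \<Rightarrow> real) \<Rightarrow> real" where
  "rotnum F = lim (\<lambda>n. ((F ^^ n) 0 - 0) / real n)"

end

(* A lift F of type f_{l,alpha,theta} equals -K for an involution K whose fixed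
   points modulo 1 are the two break points, and two consequences of this shape the plateaus.
   First, every one-sided slope of F^q is Lambda^i with i of the parity of q, so for odd q no F^q
   is a translation x + p; then F_u^q - p lies strictly above (or below) the identity at some
   point for all nearby parameters, which locks rho on an interval at every value p/q, q odd.
   Second, if rho(F) = p/(2n) in lowest terms then F^(2n) = x + p: the periodic points form a
   closed set invariant under F and K, and on a gap of it the one-sided slopes in
   K = F^n o K o F^n force F^(2n) to have slope 1 at an endpoint. A uniformly larger map then
   has a larger rotation number, so p/(2n) is never locked. Irrational values are never locked
   either, since some iterate of F_u comes arbitrarily close to a translation. *)

theory Submission
  imports Defs
begin

lemma add_of_int_of_add_one:
  fixes h :: "real \<Rightarrow> real"
  assumes "\<And>x. h (x + 1) = h x + c"
  shows "h (x + of_int k) = h x + of_int k * c"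
proof -
  have nat: "h (y + real n) = h y + real n * c" for y n
  proof (induction n)
    case (Suc n)
    have "h (y + real (Suc n)) = h ((y + real n) + 1)" by (simp add: algebra_simps)
    also have "\<dots> = h (y + real n) + c" by (rule assms)
    finally show ?case using Suc by (simp add: algebra_simps)
  qed simp
  show ?thesis
  proof (cases "k \<ge> 0")
    case True
    then obtain n where "k = int n" by (metis nonneg_eq_int)
    then show ?thesis using nat by simp
  next
    case False
    define n where "n = nat (- k)"
    have k: "k = - int n" using False by (simp add: n_def)
    have "h (x - real n + real n) = h (x - real n) + real n * c" by (rule nat)
    then show ?thesis using k by (simp add: algebra_simps)
  qed
qed

lemma periodic_positive_bounded_below:
  fixes h :: "real \<Rightarrow> real"
  assumes cont: "continuous_on UNIV h" and periodic: "\<And>x. h (x + 1) = h x"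
    and pos: "\<And>x. h x > 0"
  obtains \<delta> where "\<delta> > 0" "\<And>x. \<delta> \<le> h x"
proof -
  have "continuous_on {0..1} h" using cont by (rule continuous_on_subset) simp
  then obtain x1 where x1: "\<forall>y\<in>{0..1}. h x1 \<le> h y"
    using continuous_attains_inf[of "{0..1::real}" h] by auto
  have "h x1 \<le> h x" for x
  proof -
    have "h x = h (frac x)"
      using add_of_int_of_add_one[of h 0 "frac x" "\<lfloor>x\<rfloor>"] periodic by (simp add: frac_def)
    then show ?thesis using x1 frac_ge_0[of x] frac_lt_1[of x] by simp
  qed
  then show thesis using that pos[of x1] by blast
qed

lemma continuous_nonvanishing_sign_cases:
  fixes h :: "real \<Rightarrow> real"
  assumes cont: "continuous_on UNIV h" and nonzero: "\<And>x. h x \<noteq> 0"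
  shows "(\<forall>x. h x > 0) \<or> (\<forall>x. h x < 0)"
proof (rule ccontr)
  assume "\<not> ?thesis"
  then obtain x y where "h x < 0" "h y > 0" using nonzero by (meson linorder_neqE_linordered_idom)
  moreover have "continuous_on {min x y..max x y} h" using cont by (rule continuous_on_subset) simp
  ultimately obtain z where "h z = 0"
    using IVT'[of h x 0 y] IVT2'[of h x 0 y] by (cases "x \<le> y") (auto simp: min_def max_def)
  then show False using nonzero by blast
qed

lemma mono_if_mono_on_period:
  fixes g :: "real \<Rightarrow> real"
  assumes add_one: "\<And>x. g (x + 1) = g x + c" and "c \<ge> 0"
    and on_period: "\<And>x y. a \<le> x \<Longrightarrow> x \<le> y \<Longrightarrow> y \<le> a + 1 \<Longrightarrow> g x \<le> g y"
  shows "mono g"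
proof (rule monoI)
  fix x y :: real assume "x \<le> y"
  define k j where "k = \<lfloor>x - a\<rfloor>" and "j = \<lfloor>y - a\<rfloor>"
  define s t where "s = frac (x - a)" and "t = frac (y - a)"
  have st: "0 \<le> s" "s < 1" "0 \<le> t" "t < 1" by (simp_all add: s_def t_def frac_lt_1)
  have shift: "g (a + u + of_int i) = g (a + u) + of_int i * c" for u i
    by (rule add_of_int_of_add_one) (rule add_one)
  have x: "x = a + s + of_int k" and y: "y = a + t + of_int j"
    by (simp_all add: s_def t_def k_def j_def frac_def)
  have "k \<le> j" using \<open>x \<le> y\<close> by (simp add: k_def j_def floor_mono)
  show "g x \<le> g y"
  proof (cases "k = j")
    case True
    then have "s \<le> t" using \<open>x \<le> y\<close> x y by simp
    then show ?thesis unfolding x y using True shift on_period st by simp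
  next
    case False
    then have "of_int k + 1 \<le> (of_int j :: real)" using \<open>k \<le> j\<close> by simp
    then have "(of_int k + 1) * c \<le> of_int j * c" using \<open>c \<ge> 0\<close> by (rule mult_right_mono)
    moreover have "g (a + s) \<le> g (a + 1)" "g a \<le> g (a + t)" using on_period st by simp_all
    moreover have "g (a + 1) = g a + c" using add_one by simp
    ultimately show ?thesis unfolding x y shift by (simp add: algebra_simps)
  qed
qed

lemma le_of_nat_mult_le_add_const:
  fixes a b C :: real
  assumes "\<And>k::nat. real k * a \<le> real k * b + C"
  shows "a \<le> b"
proof (rule ccontr)
  assume "\<not> a \<le> b"
  then have ab: "a - b > 0" by simp
  obtain k :: nat where "\<bar>C\<bar> / (a - b) < k" using reals_Archimedean2 by blast
  then have "\<bar>C\<bar> < k * (a - b)" using ab by (simp add: field_simps)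
  then show False using assms[of k] by (simp add: algebra_simps)
qed

lemma pigeonhole_unit_interval:
  fixes \<theta> :: "nat \<Rightarrow> real" and N :: nat
  assumes range: "\<And>i. \<theta> i \<in> {0..<1}" and "N > 0"
  obtains i j where "i < j" "\<bar>\<theta> j - \<theta> i\<bar> < 1 / N"
proof -
  define box where "box i = nat \<lfloor>N * \<theta> i\<rfloor>" for i
  have "box ` {0..N} \<subseteq> {0..<N}"
  proof
    fix y assume "y \<in> box ` {0..N}"
    then obtain i where "y = box i" by blast
    moreover have "N * \<theta> i < N" "0 \<le> N * \<theta> i" using range[of i] \<open>N > 0\<close> by simp_all
    ultimately show "y \<in> {0..<N}" by (simp add: box_def floor_less_iff nat_less_iff)
  qed
  then have "\<not> inj_on box {0..N}" using card_inj_on_le[of box "{0..N}" "{0..<N}"] by auto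
  then obtain i j where "i \<noteq> j" "box i = box j" unfolding inj_on_def by blast
  then obtain i j where ij: "i < j" "box i = box j" by (metis linorder_neqE_nat)
  then have "\<lfloor>N * \<theta> i\<rfloor> = \<lfloor>N * \<theta> j\<rfloor>" using range by (simp add: box_def nat_eq_iff2)
  then have "\<bar>N * \<theta> j - N * \<theta> i\<bar> < 1"
    using floor_correct[of "N * \<theta> i"] floor_correct[of "N * \<theta> j"] by simp linarith
  moreover have "\<bar>N * \<theta> j - N * \<theta> i\<bar> = N * \<bar>\<theta> j - \<theta> i\<bar>"
    by (simp add: right_diff_distrib[symmetric] abs_mult)
  ultimately have "N * \<bar>\<theta> j - \<theta> i\<bar> < 1" by simp
  then have "\<bar>\<theta> j - \<theta> i\<bar> < 1 / N" using \<open>N > 0\<close> by (simp add: pos_less_divide_eq mult.commute)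
  then show thesis by (rule that[OF ij(1)])
qed

section \<open>Rotation numbers of circle lifts\<close>

locale circle_lift =
  fixes G :: "real \<Rightarrow> real"
  assumes strict_mono: "strict_mono G"
    and add_one: "G (x + 1) = G x + 1"
    and cont: "continuous_on UNIV G"
begin

lemma add_of_int: "G (x + of_int k) = G x + of_int k"
  using add_of_int_of_add_one[of G 1 x k] add_one by simp

lemma iter_add_of_int: "(G ^^ n) (x + of_int k) = (G ^^ n) x + of_int k"
  by (induction n) (auto simp: add_of_int)

lemma iter_diff_of_int: "(G ^^ n) (x - of_int k) = (G ^^ n) x - of_int k"
  using iter_add_of_int[of n x "- k"] by simp

lemma strict_mono_iter: "strict_mono (G ^^ n)"
proof (induction n)
  case (Suc n)
  then show ?case using strict_mono_o[OF strict_mono Suc] by (simp only: funpow.simps(2))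
qed (simp add: strict_mono_def)

lemma iter_less_iff: "(G ^^ n) x < (G ^^ n) y \<longleftrightarrow> x < y"
  using strict_mono_iter by (rule strict_mono_less)

lemma iter_le_iff: "(G ^^ n) x \<le> (G ^^ n) y \<longleftrightarrow> x \<le> y"
  using strict_mono_iter by (rule strict_mono_less_eq)

lemma iter_eq_iff: "(G ^^ n) x = (G ^^ n) y \<longleftrightarrow> x = y"
  using strict_mono_iter by (rule strict_mono_eq)

lemma continuous_on_iter: "continuous_on UNIV (G ^^ n)"
proof (induction n)
  case (Suc n)
  then show ?case
    using continuous_on_compose[OF Suc continuous_on_subset[OF cont]] by simp
qed (simp add: continuous_on_id id_def)

lemma iter_displacement_bound: "\<bar>(G ^^ n) x - x - (G ^^ n) 0\<bar> \<le> 1"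
proof -
  have "(G ^^ n) x = (G ^^ n) (frac x) + of_int \<lfloor>x\<rfloor>"
    using iter_add_of_int[of n "frac x" "\<lfloor>x\<rfloor>"] by (simp add: frac_def)
  moreover have "(G ^^ n) 0 \<le> (G ^^ n) (frac x)" "(G ^^ n) (frac x) \<le> (G ^^ n) (0 + of_int 1)"
    using iter_le_iff frac_ge_0[of x] frac_lt_1[of x] by simp_all
  ultimately show ?thesis
    using iter_add_of_int[of n 0 1] frac_ge_0[of x] frac_lt_1[of x] unfolding frac_def
    by (simp add: abs_le_iff) linarith
qed

lemma iter_zero_add_bound: "\<bar>(G ^^ (m + n)) 0 - (G ^^ m) 0 - (G ^^ n) 0\<bar> \<le> 1"
  using iter_displacement_bound[of m "(G ^^ n) 0"] by (simp add: funpow_add)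

lemma iter_zero_mult_bound: "\<bar>(G ^^ (k * n)) 0 - real k * (G ^^ n) 0\<bar> \<le> real k"
proof (induction k)
  case (Suc k)
  then show ?case
    using iter_zero_add_bound[of n "k * n"] by (simp add: algebra_simps abs_le_iff)
qed simp

lemma iter_zero_quotients_close:
  assumes "m \<ge> 1" "n \<ge> 1"
  shows "\<bar>(G ^^ m) 0 / m - (G ^^ n) 0 / n\<bar> \<le> 1 / m + 1 / n"
proof -
  define c where "c k = (G ^^ k) 0" for k
  have pos: "real m > 0" "real n > 0" using assms by auto
  have "\<bar>c (m * n) / (m * n) - c m / m\<bar> = \<bar>c (n * m) - n * c m\<bar> / (m * n)"
    using pos by (simp add: field_simps mult.commute abs_divide abs_mult)
  also have "\<dots> \<le> 1 / m"
    using iter_zero_mult_bound[of n m] pos by (simp add: c_def field_simps)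
  finally have m: "\<bar>c (m * n) / (m * n) - c m / m\<bar> \<le> 1 / m" .
  have "\<bar>c (m * n) / (m * n) - c n / n\<bar> = \<bar>c (m * n) - m * c n\<bar> / (m * n)"
    using pos by (simp add: field_simps abs_divide abs_mult)
  also have "\<dots> \<le> 1 / n"
    using iter_zero_mult_bound[of m n] pos by (simp add: c_def field_simps)
  finally have "\<bar>c (m * n) / (m * n) - c n / n\<bar> \<le> 1 / n" .
  with m have "\<bar>c m / m - c n / n\<bar> \<le> 1 / m + 1 / n" by linarith
  then show ?thesis by (simp only: c_def)
qed

lemma LIMSEQ_rotnum: "(\<lambda>n. (G ^^ n) 0 / n) \<longlonglongrightarrow> rotnum G"
proof -
  have "Cauchy (\<lambda>n. (G ^^ n) 0 / n)"
  proof (rule CauchyI)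
    fix e :: real assume e: "e > 0"
    obtain M :: nat where "max 1 (2 / e) < M" using reals_Archimedean2 by blast
    then have M1: "M \<ge> 1" and M: "2 / e < M" by simp_all
    have "\<bar>(G ^^ m) 0 / m - (G ^^ n) 0 / n\<bar> < e" if "M \<le> m" "M \<le> n" for m n
    proof -
      have "\<bar>(G ^^ m) 0 / m - (G ^^ n) 0 / n\<bar> \<le> 1 / m + 1 / n"
        using iter_zero_quotients_close that M1 by simp
      also have "\<dots> \<le> 1 / M + 1 / M"
        by (intro add_mono divide_left_mono) (use that M1 in auto)
      also have "\<dots> < e" using M e M1 by (simp add: field_simps)
      finally show ?thesis .
    qed
    then show "\<exists>M. \<forall>m\<ge>M. \<forall>n\<ge>M. norm ((G ^^ m) 0 / m - (G ^^ n) 0 / n) < e" by auto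
  qed
  then show ?thesis
    unfolding rotnum_def by (simp add: Cauchy_convergent_iff convergent_LIMSEQ_iff)
qed

lemma iter_rotnum_bound: "\<bar>(G ^^ n) x - x - n * rotnum G\<bar> \<le> 2"
proof (cases "n = 0")
  case False
  have "\<bar>(G ^^ n) 0 / n - rotnum G\<bar> \<le> 1 / n"
  proof (rule LIMSEQ_le)
    show "(\<lambda>m. \<bar>(G ^^ n) 0 / n - (G ^^ m) 0 / m\<bar>) \<longlonglongrightarrow> \<bar>(G ^^ n) 0 / n - rotnum G\<bar>"
      by (intro tendsto_intros LIMSEQ_rotnum)
    show "(\<lambda>m. 1 / m + 1 / n) \<longlonglongrightarrow> 1 / n"
      using tendsto_add[OF lim_const_over_n tendsto_const, of 1 "1 / n"] by simp
    show "\<exists>N. \<forall>m\<ge>N. \<bar>(G ^^ n) 0 / n - (G ^^ m) 0 / m\<bar> \<le> 1 / m + 1 / n"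
      using iter_zero_quotients_close[of _ n] False
      by (intro exI[of _ 1]) (simp add: abs_minus_commute add.commute)
  qed
  then have "\<bar>(G ^^ n) 0 - n * rotnum G\<bar> \<le> 1"
    using False by (simp add: field_simps abs_divide)
  then show ?thesis using iter_displacement_bound[of n x] by (simp add: abs_le_iff)
qed simp

lemma rotnum_ge_if_iter_ge_mult:
  assumes "q > 0" and "\<And>k. x + real k * r \<le> (G ^^ (q * k)) x"
  shows "r / q \<le> rotnum G"
proof -
  have "real k * r \<le> real k * (q * rotnum G) + 2" for k
  proof -
    have "real (q * k) * rotnum G = real k * (q * rotnum G)" by simp
    then show ?thesis using assms(2)[of k] iter_rotnum_bound[of "q * k" x] by linarith
  qed
  then have "r \<le> q * rotnum G" by (rule le_of_nat_mult_le_add_const)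
  then show ?thesis using assms(1) by (simp add: field_simps)
qed

lemma rotnum_le_if_iter_le_mult:
  assumes "q > 0" and "\<And>k. (G ^^ (q * k)) x \<le> x + real k * r"
  shows "rotnum G \<le> r / q"
proof -
  have "real k * (q * rotnum G) \<le> real k * r + 2" for k
  proof -
    have "real (q * k) * rotnum G = real k * (q * rotnum G)" by simp
    then show ?thesis using assms(2)[of k] iter_rotnum_bound[of "q * k" x] by linarith
  qed
  then have "q * rotnum G \<le> r" by (rule le_of_nat_mult_le_add_const)
  then show ?thesis using assms(1) by (simp add: field_simps)
qed

lemma rotnum_ge_if_iter_ge:
  assumes "q > 0" and iter: "x + of_int p \<le> (G ^^ q) x"
  shows "of_int p / q \<le> rotnum G"
proof (rule rotnum_ge_if_iter_ge_mult[OF assms(1)])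
  show "x + real k * of_int p \<le> (G ^^ (q * k)) x" for k
  proof (induction k)
    case (Suc k)
    have "x + real (Suc k) * of_int p \<le> (G ^^ q) x + of_int (int k * p)"
      using iter by (simp add: algebra_simps)
    also have "\<dots> = (G ^^ q) (x + of_int (int k * p))" by (simp only: iter_add_of_int)
    also have "\<dots> \<le> (G ^^ q) ((G ^^ (q * k)) x)" using Suc iter_le_iff by simp
    finally show ?case by (simp add: funpow_add)
  qed simp
qed

lemma rotnum_le_if_iter_le:
  assumes "q > 0" and iter: "(G ^^ q) x \<le> x + of_int p"
  shows "rotnum G \<le> of_int p / q"
proof (rule rotnum_le_if_iter_le_mult[OF assms(1)])
  show "(G ^^ (q * k)) x \<le> x + real k * of_int p" for k
  proof (induction k)
    case (Suc k)
    have "(G ^^ (q * Suc k)) x = (G ^^ q) ((G ^^ (q * k)) x)" by (simp add: funpow_add)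
    also have "\<dots> \<le> (G ^^ q) (x + of_int (int k * p))" using Suc iter_le_iff by simp
    also have "\<dots> = (G ^^ q) x + of_int (int k * p)" by (rule iter_add_of_int)
    finally show ?case using iter by (simp add: algebra_simps)
  qed simp
qed

lemma rotnum_eq_if_iter_eq:
  assumes "q > 0" "(G ^^ q) x = x + of_int p"
  shows "rotnum G = of_int p / q"
  using rotnum_ge_if_iter_ge[of q x p] rotnum_le_if_iter_le[of q x p] assms by simp

lemma rotnum_ge_if_iter_ge_everywhere:
  assumes "q > 0" and iter: "\<And>x. x + r \<le> (G ^^ q) x"
  shows "r / q \<le> rotnum G"
proof (rule rotnum_ge_if_iter_ge_mult[OF assms(1)])
  show "0 + real k * r \<le> (G ^^ (q * k)) 0" for k
  proof (induction k)
    case (Suc k)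
    have "0 + real (Suc k) * r \<le> (G ^^ (q * k)) 0 + r" using Suc by (simp add: algebra_simps)
    also have "\<dots> \<le> (G ^^ q) ((G ^^ (q * k)) 0)" by (rule iter)
    finally show ?case by (simp add: funpow_add)
  qed simp
qed

lemma rotnum_le_if_iter_le_everywhere:
  assumes "q > 0" and iter: "\<And>x. (G ^^ q) x \<le> x + r"
  shows "rotnum G \<le> r / q"
proof (rule rotnum_le_if_iter_le_mult[OF assms(1)])
  show "(G ^^ (q * k)) 0 \<le> 0 + real k * r" for k
  proof (induction k)
    case (Suc k)
    have "(G ^^ (q * Suc k)) 0 = (G ^^ q) ((G ^^ (q * k)) 0)" by (simp add: funpow_add)
    also have "\<dots> \<le> (G ^^ (q * k)) 0 + r" by (rule iter)
    finally show ?case using Suc by (simp add: algebra_simps)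
  qed simp
qed

lemma periodic_point_if_rotnum_eq:
  assumes q: "q > 0" and rot: "rotnum G = of_int p / q"
  obtains x where "(G ^^ q) x = x + of_int p"
proof (rule ccontr)
  assume no_point: "\<not> thesis"
  define h where "h x = (G ^^ q) x - x - of_int p" for x
  have cont_h: "continuous_on UNIV h"
    unfolding h_def by (intro continuous_intros continuous_on_iter)
  have periodic_h: "h (x + 1) = h x" for x
    unfolding h_def using iter_add_of_int[of q x 1] by simp
  have "h x \<noteq> 0" for x using no_point that[of x] unfolding h_def by auto
  from continuous_nonvanishing_sign_cases[OF cont_h this] show False
  proof
    assume "\<forall>x. h x > 0"
    then obtain \<delta> where \<delta>: "\<delta> > 0" "\<And>x. \<delta> \<le> h x"
      using periodic_positive_bounded_below[OF cont_h periodic_h] by blast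
    have "x + (of_int p + \<delta>) \<le> (G ^^ q) x" for x using \<delta>(2)[of x] by (simp add: h_def)
    then have "(of_int p + \<delta>) / q \<le> rotnum G" by (rule rotnum_ge_if_iter_ge_everywhere[OF q])
    moreover have "of_int p / q < (of_int p + \<delta>) / q" using \<delta>(1) q by (simp add: divide_strict_right_mono)
    ultimately show False using rot by linarith
  next
    assume neg: "\<forall>x. h x < 0"
    obtain \<delta> where \<delta>: "\<delta> > 0" "\<And>x. \<delta> \<le> - h x"
    proof (rule periodic_positive_bounded_below[of "\<lambda>x. - h x"])
      show "continuous_on UNIV (\<lambda>x. - h x)" using cont_h by (rule continuous_on_minus)
    qed (use periodic_h neg that in auto)
    have "(G ^^ q) x \<le> x + (of_int p - \<delta>)" for x using \<delta>(2)[of x] by (simp add: h_def)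
    then have "rotnum G \<le> (of_int p - \<delta>) / q" by (rule rotnum_le_if_iter_le_everywhere[OF q])
    moreover have "(of_int p - \<delta>) / q < of_int p / q" using \<delta>(1) q by (simp add: divide_strict_right_mono)
    ultimately show False using rot by linarith
  qed
qed

lemma iter_near_translation:
  assumes "\<epsilon> > 0"
  obtains m k x where "m > 0" "\<bar>(G ^^ m) x - (x + of_int k)\<bar> < \<epsilon>"
proof -
  obtain N :: nat where N: "1 / \<epsilon> < N" using reals_Archimedean2 by blast
  moreover have "0 < 1 / \<epsilon>" using assms by simp
  ultimately have "0 < real N" by linarith
  then have "N > 0" by simp
  define \<theta> where "\<theta> i = frac ((G ^^ i) 0)" for i
  obtain i j where ij: "i < j" "\<bar>\<theta> j - \<theta> i\<bar> < 1 / N"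
    using pigeonhole_unit_interval[of \<theta> N] \<open>N > 0\<close> by (auto simp: \<theta>_def frac_lt_1)
  define x where "x = (G ^^ i) 0"
  have "(G ^^ (j - i)) x = (G ^^ ((j - i) + i)) 0" by (simp only: x_def funpow_add comp_apply)
  also have "(j - i) + i = j" using ij(1) by simp
  finally have "(G ^^ (j - i)) x = (G ^^ j) 0" .
  then have eq: "(G ^^ (j - i)) x - (x + of_int (\<lfloor>(G ^^ j) 0\<rfloor> - \<lfloor>x\<rfloor>)) = \<theta> j - \<theta> i"
    by (simp add: \<theta>_def x_def frac_def)
  have "1 / N < \<epsilon>" using N assms \<open>N > 0\<close> by (simp add: field_simps)
  then have "\<bar>(G ^^ (j - i)) x - (x + of_int (\<lfloor>(G ^^ j) 0\<rfloor> - \<lfloor>x\<rfloor>))\<bar> < \<epsilon>"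
    unfolding eq using ij(2) by linarith
  then show thesis by (rule that[rotated]) (use ij(1) in simp)
qed

end

lemma rotnum_mono:
  assumes "circle_lift G" "circle_lift H" and le: "\<And>x. G x \<le> H x"
  shows "rotnum G \<le> rotnum H"
proof -
  interpret G: circle_lift G by fact
  interpret H: circle_lift H by fact
  have "(G ^^ n) 0 \<le> (H ^^ n) 0" for n
  proof (induction n)
    case (Suc n)
    have "G ((G ^^ n) 0) \<le> H ((G ^^ n) 0)" by (rule le)
    also have "\<dots> \<le> H ((H ^^ n) 0)" using Suc H.iter_le_iff[of 1] by simp
    finally show ?case by simp
  qed simp
  then have "(G ^^ n) 0 / n \<le> (H ^^ n) 0 / n" for n by (simp add: divide_right_mono)
  then show ?thesis using LIMSEQ_le[OF G.LIMSEQ_rotnum H.LIMSEQ_rotnum] by blast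
qed

lemma iter_add_le_iter:
  assumes "circle_lift H" and le: "\<And>x. G x + \<delta> \<le> H x" and "\<delta> \<ge> 0" "q \<ge> 1"
  shows "(G ^^ q) x + \<delta> \<le> (H ^^ q) x"
proof -
  interpret H: circle_lift H by fact
  have iter_le: "(G ^^ n) x \<le> (H ^^ n) x" for n
  proof (induction n)
    case (Suc n)
    have "G ((G ^^ n) x) \<le> H ((G ^^ n) x)" using le[of "(G ^^ n) x"] \<open>\<delta> \<ge> 0\<close> by linarith
    also have "\<dots> \<le> H ((H ^^ n) x)" using Suc H.iter_le_iff[of 1] by simp
    finally show ?case by simp
  qed simp
  obtain k where k: "q = Suc k" using \<open>q \<ge> 1\<close> by (cases q) auto
  have "(G ^^ q) x + \<delta> \<le> H ((G ^^ k) x)" using k le by simp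
  also have "\<dots> \<le> H ((H ^^ k) x)" using iter_le H.iter_le_iff[of 1] by simp
  finally show ?thesis using k by simp
qed

lemma circle_lift_uniformly_less:
  assumes "circle_lift G" "circle_lift H" and less: "\<And>x. G x < H x"
  obtains \<delta> where "\<delta> > 0" "\<And>x. G x + \<delta> \<le> H x"
proof -
  interpret G: circle_lift G by fact
  interpret H: circle_lift H by fact
  obtain \<delta> where \<delta>: "\<delta> > 0" "\<And>x. \<delta> \<le> H x - G x"
  proof (rule periodic_positive_bounded_below[of "\<lambda>x. H x - G x"])
    show "continuous_on UNIV (\<lambda>x. H x - G x)" by (intro continuous_on_diff H.cont G.cont)
  qed (use G.add_one H.add_one less that in auto)
  show thesis
  proof (rule that[OF \<delta>(1)])
    show "G x + \<delta> \<le> H x" for x using \<delta>(2)[of x] by simp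
  qed
qed

section \<open>One-sided slopes\<close>

definition has_slope_on :: "(real \<Rightarrow> real) \<Rightarrow> real set \<Rightarrow> real \<Rightarrow> bool" where
  "has_slope_on G S s \<longleftrightarrow> (\<forall>z\<in>S. \<forall>w\<in>S. G w - G z = s * (w - z))"

definition right_slope :: "(real \<Rightarrow> real) \<Rightarrow> real \<Rightarrow> real \<Rightarrow> bool" where
  "right_slope G x s \<longleftrightarrow> (\<exists>e>0. has_slope_on G {x..x + e} s)"

definition left_slope :: "(real \<Rightarrow> real) \<Rightarrow> real \<Rightarrow> real \<Rightarrow> bool" where
  "left_slope G x s \<longleftrightarrow> (\<exists>e>0. has_slope_on G {x - e..x} s)"

lemma has_slope_onD: "has_slope_on G S s \<Longrightarrow> z \<in> S \<Longrightarrow> w \<in> S \<Longrightarrow> G w = G z + s * (w - z)"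
  unfolding has_slope_on_def by force

lemma has_slope_on_subset: "has_slope_on G T s \<Longrightarrow> S \<subseteq> T \<Longrightarrow> has_slope_on G S s"
  unfolding has_slope_on_def by blast

lemma has_slope_on_comp:
  assumes "has_slope_on G S s" "G ` S \<subseteq> T" "has_slope_on H T t"
  shows "has_slope_on (H \<circ> G) S (s * t)"
proof (unfold has_slope_on_def, intro ballI)
  fix z w assume zw: "z \<in> S" "w \<in> S"
  then have "(H \<circ> G) w - (H \<circ> G) z = t * (G w - G z)"
    using assms(2,3) unfolding has_slope_on_def image_subset_iff by simp
  also have "\<dots> = s * t * (w - z)" using has_slope_onD[OF assms(1) zw] by simp
  finally show "(H \<circ> G) w - (H \<circ> G) z = s * t * (w - z)" .
qed

lemma has_slope_on_translate:
  assumes "has_slope_on G S s" and "\<And>z. G (z + c) = G z + c"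
  shows "has_slope_on G ((\<lambda>z. z + c) ` S) s"
  using assms unfolding has_slope_on_def by auto

lemma has_slope_on_const_imp_eq:
  assumes "has_slope_on G {x..y} s" "x < y" "G y - G x = y - x"
  shows "s = 1"
  using has_slope_onD[OF assms(1), of x y] assms(2,3) by simp

lemma right_slope_if_has_slope_on: "has_slope_on G {x..y} s \<Longrightarrow> x < y \<Longrightarrow> right_slope G x s"
  unfolding right_slope_def by (intro exI[of _ "y - x"]) auto

lemma left_slope_if_has_slope_on: "has_slope_on G {x..y} s \<Longrightarrow> x < y \<Longrightarrow> left_slope G y s"
  unfolding left_slope_def by (intro exI[of _ "y - x"]) auto

lemma right_slope_unique:
  assumes "right_slope G x s" "right_slope G x t"
  shows "s = t"
proof -
  obtain e1 e2 where e: "e1 > 0" "e2 > 0"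
    and s: "has_slope_on G {x..x + e1} s" and t: "has_slope_on G {x..x + e2} t"
    using assms unfolding right_slope_def by blast
  have "G (x + min e1 e2) = G x + s * min e1 e2" "G (x + min e1 e2) = G x + t * min e1 e2"
    using has_slope_onD[OF s, of x "x + min e1 e2"] has_slope_onD[OF t, of x "x + min e1 e2"] e
    by auto
  then show ?thesis using e by auto
qed

lemma left_slope_unique:
  assumes "left_slope G x s" "left_slope G x t"
  shows "s = t"
proof -
  obtain e1 e2 where e: "e1 > 0" "e2 > 0"
    and s: "has_slope_on G {x - e1..x} s" and t: "has_slope_on G {x - e2..x} t"
    using assms unfolding left_slope_def by blast
  have "G x = G (x - min e1 e2) + s * min e1 e2" "G x = G (x - min e1 e2) + t * min e1 e2"
    using has_slope_onD[OF s, of "x - min e1 e2" x] has_slope_onD[OF t, of "x - min e1 e2" x] e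
    by auto
  then show ?thesis using e by auto
qed

lemma right_slope_comp:
  assumes G: "right_slope G x s" "s > 0" and H: "right_slope H (G x) t"
  shows "right_slope (H \<circ> G) x (s * t)"
proof -
  obtain e1 where e1: "e1 > 0" "has_slope_on G {x..x + e1} s" using G unfolding right_slope_def by blast
  obtain e2 where e2: "e2 > 0" "has_slope_on H {G x..G x + e2} t" using H unfolding right_slope_def by blast
  define e where "e = min e1 (e2 / s)"
  have G_e: "has_slope_on G {x..x + e} s" using e1(2) by (rule has_slope_on_subset) (auto simp: e_def)
  moreover have "G ` {x..x + e} \<subseteq> {G x..G x + e2}"
  proof
    fix w assume "w \<in> G ` {x..x + e}"
    then obtain z where z: "z \<in> {x..x + e}" "w = G z" by blast
    have "s * (z - x) \<le> s * (e2 / s)" using z G(2) by (intro mult_left_mono) (auto simp: e_def)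
    then show "w \<in> {G x..G x + e2}" using has_slope_onD[OF G_e, of x z] z G(2) by simp
  qed
  ultimately have "has_slope_on (H \<circ> G) {x..x + e} (s * t)" using e2 by (intro has_slope_on_comp)
  then show ?thesis unfolding right_slope_def using e1 e2 G(2) by (intro exI[of _ e]) (simp add: e_def)
qed

lemma right_slope_comp_decreasing:
  assumes G: "right_slope G x s" "s < 0" and H: "left_slope H (G x) t"
  shows "right_slope (H \<circ> G) x (s * t)"
proof -
  obtain e1 where e1: "e1 > 0" "has_slope_on G {x..x + e1} s" using G unfolding right_slope_def by blast
  obtain e2 where e2: "e2 > 0" "has_slope_on H {G x - e2..G x} t" using H unfolding left_slope_def by blast
  define e where "e = min e1 (e2 / - s)"
  have G_e: "has_slope_on G {x..x + e} s" using e1(2) by (rule has_slope_on_subset) (auto simp: e_def)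
  moreover have "G ` {x..x + e} \<subseteq> {G x - e2..G x}"
  proof
    fix w assume "w \<in> G ` {x..x + e}"
    then obtain z where z: "z \<in> {x..x + e}" "w = G z" by blast
    have "- s * (z - x) \<le> - s * (e2 / - s)" using z G(2) by (intro mult_left_mono) (auto simp: e_def)
    moreover have "s * (z - x) \<le> 0" using z G(2) by (simp add: mult_nonpos_nonneg)
    ultimately show "w \<in> {G x - e2..G x}" using has_slope_onD[OF G_e, of x z] z G(2) by simp
  qed
  ultimately have "has_slope_on (H \<circ> G) {x..x + e} (s * t)" using e2 by (intro has_slope_on_comp)
  then show ?thesis
    unfolding right_slope_def using e1 e2 G(2) by (intro exI[of _ e]) (simp add: e_def divide_pos_neg)
qed

lemma left_slope_comp:
  assumes G: "left_slope G x s" "s > 0" and H: "left_slope H (G x) t"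
  shows "left_slope (H \<circ> G) x (s * t)"
proof -
  obtain e1 where e1: "e1 > 0" "has_slope_on G {x - e1..x} s" using G unfolding left_slope_def by blast
  obtain e2 where e2: "e2 > 0" "has_slope_on H {G x - e2..G x} t" using H unfolding left_slope_def by blast
  define e where "e = min e1 (e2 / s)"
  have G_e: "has_slope_on G {x - e..x} s" using e1(2) by (rule has_slope_on_subset) (auto simp: e_def)
  moreover have "G ` {x - e..x} \<subseteq> {G x - e2..G x}"
  proof
    fix w assume "w \<in> G ` {x - e..x}"
    then obtain z where z: "z \<in> {x - e..x}" "w = G z" by blast
    have "s * (x - z) \<le> s * (e2 / s)" using z G(2) by (intro mult_left_mono) (auto simp: e_def)
    moreover have "s * (e2 / s) = e2" "0 \<le> s * (x - z)" using z G(2) by simp_all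
    moreover have "G z = G x - s * (x - z)" using has_slope_onD[OF G_e, of x z] z by (simp add: algebra_simps)
    ultimately show "w \<in> {G x - e2..G x}" unfolding z(2) atLeastAtMost_iff by (intro conjI; linarith)
  qed
  ultimately have "has_slope_on (H \<circ> G) {x - e..x} (s * t)" using e2 by (intro has_slope_on_comp)
  then show ?thesis unfolding left_slope_def using e1 e2 G(2) by (intro exI[of _ e]) (simp add: e_def)
qed

lemma right_slope_uminus: "right_slope G x s \<Longrightarrow> right_slope (\<lambda>z. - G z) x (- s)"
  unfolding right_slope_def has_slope_on_def by (auto simp: algebra_simps)

lemma left_slope_translate:
  assumes "left_slope G x s" and "\<And>z. G (z + c) = G z + c"
  shows "left_slope G (x + c) s"
proof -
  obtain e where e: "e > 0" "has_slope_on G {x - e..x} s" using assms(1) unfolding left_slope_def by blast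
  have image: "(\<lambda>z. z + c) ` {x - e..x} = {x + c - e..x + c}" by (simp add: algebra_simps)
  have "has_slope_on G {x + c - e..x + c} s"
    using has_slope_on_translate[OF e(2) assms(2)] unfolding image .
  then show ?thesis using e(1) unfolding left_slope_def by blast
qed

section \<open>Lifts of type \<open>f\<^sub>\<ell>\<^sub>,\<^sub>\<alpha>\<^sub>,\<^sub>\<theta>\<close>\<close>

text \<open>One period of a map of type \<open>f\<^sub>\<ell>\<^sub>,\<^sub>\<alpha>\<^sub>,\<^sub>\<theta>\<close>, read from the break point \<open>a\<^sub>0\<close>:
  slope \<open>L\<close> on \<open>[0, d]\<close> and slope \<open>1/L\<close> on \<open>[d, 1]\<close>, where \<open>d = 1/(L+1)\<close> makes it end at \<open>1\<close>.\<close>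

definition trap_profile :: "real \<Rightarrow> real \<Rightarrow> real" where
  "trap_profile L t = (if t \<le> 1 / (L + 1) then L * t else 1 - (1 - t) / L)"

locale trapezoid_lift =
  fixes F :: "real \<Rightarrow> real" and L a0 :: real and m0 :: int
  assumes slope_gt_1: "L > 1"
    and add_one: "F (x + 1) = F x + 1"
    and on_period: "t \<in> {0..1} \<Longrightarrow> F (a0 + t) = of_int m0 - a0 + trap_profile L t"
begin

definition d where "d = 1 / (L + 1)"

lemma d_pos: "0 < d" and d_less_1: "d < 1"
  using slope_gt_1 by (simp_all add: d_def)

lemma L_mult_d: "L * d = 1 - d"
proof -
  have "L + 1 \<noteq> 0" using slope_gt_1 by simp
  then show ?thesis by (simp add: d_def field_simps)
qed

lemma one_minus_d_div_L: "(1 - d) / L = d"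
  using L_mult_d slope_gt_1 by (metis nonzero_mult_div_cancel_left not_one_less_zero)

lemma profile_first: "t \<le> d \<Longrightarrow> trap_profile L t = L * t"
  by (simp add: trap_profile_def d_def)

lemma profile_second: "d \<le> t \<Longrightarrow> trap_profile L t = 1 - (1 - t) / L"
  using L_mult_d one_minus_d_div_L by (cases "t = d") (auto simp: trap_profile_def d_def)

lemma profile_reflect:
  assumes "t \<in> {0..1}"
  shows "1 - trap_profile L t \<in> {0..1}" and "trap_profile L (1 - trap_profile L t) = 1 - t"
proof -
  have L: "L > 0" using slope_gt_1 by simp
  show "1 - trap_profile L t \<in> {0..1}" "trap_profile L (1 - trap_profile L t) = 1 - t"
  proof (atomize (full), cases "t \<le> d")
    case True
    then have "L * t \<le> 1 - d" using L_mult_d L by (metis mult_left_mono less_imp_le)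
    then show "1 - trap_profile L t \<in> {0..1} \<and> trap_profile L (1 - trap_profile L t) = 1 - t"
      using True assms L by (simp add: profile_first profile_second)
  next
    case False
    have "(1 - t) / L \<le> (1 - d) / L" using False L by (simp add: divide_right_mono)
    then have "(1 - t) / L \<le> d" using one_minus_d_div_L by simp
    then show "1 - trap_profile L t \<in> {0..1} \<and> trap_profile L (1 - trap_profile L t) = 1 - t"
      using False assms L slope_gt_1 by (simp add: profile_first profile_second)
  qed
qed

lemma profile_diff_bounds:
  assumes "0 \<le> s" "s \<le> t" "t \<le> 1"
  shows "(t - s) / L \<le> trap_profile L t - trap_profile L s"
    and "trap_profile L t - trap_profile L s \<le> L * (t - s)"
proof -
  have bounds: "u / L \<le> u" "u \<le> L * u" if "u \<ge> 0" for u
    using that slope_gt_1 mult_right_mono[of 1 L u] by (simp_all add: field_simps)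
  consider "t \<le> d" | "d \<le> s" | "s \<le> d" "d \<le> t" by linarith
  then have "(t - s) / L \<le> trap_profile L t - trap_profile L s
    \<and> trap_profile L t - trap_profile L s \<le> L * (t - s)"
  proof cases
    case 1
    then show ?thesis using bounds[of "t - s"] assms by (simp add: profile_first algebra_simps)
  next
    case 2
    then have "trap_profile L t - trap_profile L s = (t - s) / L"
      using assms by (simp add: profile_second diff_divide_distrib)
    then show ?thesis using bounds[of "t - s"] assms by linarith
  next
    case 3
    have "(1 - t) / L + (t - d) / L = (1 - d) / L" by (simp add: add_divide_distrib[symmetric])
    then have "trap_profile L t - trap_profile L s = L * (d - s) + (t - d) / L"
      using 3 L_mult_d one_minus_d_div_L by (simp add: profile_first profile_second right_diff_distrib)
    moreover have "(d - s) / L \<le> L * (d - s)" "(t - d) / L \<le> L * (t - d)"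
      using bounds[of "d - s"] bounds[of "t - d"] 3 by simp_all
    moreover have "(t - d) / L \<ge> 0" using 3 slope_gt_1 by simp
    ultimately show ?thesis using 3 by (simp add: diff_divide_distrib field_simps)
  qed
  then show "(t - s) / L \<le> trap_profile L t - trap_profile L s"
    and "trap_profile L t - trap_profile L s \<le> L * (t - s)" by simp_all
qed

lemma profile_add_self_Ints:
  assumes "0 \<le> t" "t < 1" "trap_profile L t + t \<in> \<int>"
  shows "t = 0 \<or> t = d"
proof -
  obtain j where j: "trap_profile L t + t = of_int j" using assms(3) by (elim Ints_cases)
  show ?thesis
  proof (cases "t \<le> d")
    case True
    then have "of_int j = (L + 1) * t" using j by (simp add: profile_first algebra_simps)
    moreover have "(L + 1) * t \<le> (L + 1) * d" using True slope_gt_1 by simp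
    ultimately have "0 \<le> (of_int j :: real)" "of_int j \<le> (1::real)" using assms slope_gt_1 by (simp_all add: d_def)
    then have "j = 0 \<or> j = 1" by linarith
    then consider "(L + 1) * t = 0" | "(L + 1) * t = 1" using \<open>of_int j = (L + 1) * t\<close> by force
    then show ?thesis
    proof cases
      case 1
      then show ?thesis using slope_gt_1 by simp
    next
      case 2
      then show ?thesis using slope_gt_1 by (simp add: d_def eq_divide_eq mult.commute)
    qed
  next
    case False
    have "(1 - t) / L < (1 - d) / L" using False slope_gt_1 by (simp add: divide_strict_right_mono)
    then have "1 < (of_int j :: real)" using j False one_minus_d_div_L by (simp add: profile_second)
    moreover have "(1 - t) / L > 0" using assms slope_gt_1 by simp
    then have "of_int j < (2::real)" using j assms False by (simp add: profile_second)
    ultimately show ?thesis by simp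
  qed
qed

lemma F_add_of_int: "F (x + of_int k) = F x + of_int k"
  using add_of_int_of_add_one[of F 1 x k] add_one by simp

lemma F_on_period: "t \<in> {0..1} \<Longrightarrow> F (a0 + of_int k + t) = of_int (m0 + k) - a0 + trap_profile L t"
  using F_add_of_int[of "a0 + t" k] on_period[of t] by (simp add: algebra_simps)

lemma period_decompose:
  obtains k t where "x = a0 + of_int k + t" "0 \<le> t" "t < 1"
proof -
  have "x = a0 + of_int \<lfloor>x - a0\<rfloor> + frac (x - a0)" by (simp add: frac_def)
  then show thesis using that frac_ge_0 frac_lt_1 by blast
qed

lemma F_diff_bounds:
  assumes "x \<le> y"
  shows "(y - x) / L \<le> F y - F x" and "F y - F x \<le> L * (y - x)"
proof -
  have diff: "F y - F x = trap_profile L (y - a0) - trap_profile L (x - a0)"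
    if "a0 \<le> x" "x \<le> y" "y \<le> a0 + 1" for x y
    using on_period[of "x - a0"] on_period[of "y - a0"] that by (simp add: algebra_simps)
  have "mono (\<lambda>x. F x - x / L)"
  proof (rule mono_if_mono_on_period)
    show "F (x + 1) - (x + 1) / L = F x - x / L + (1 - 1 / L)" for x
      using add_one by (simp add: add_divide_distrib)
    show "F x - x / L \<le> F y - y / L" if "a0 \<le> x" "x \<le> y" "y \<le> a0 + 1" for x y
      using profile_diff_bounds(1)[of "x - a0" "y - a0"] diff[of x y] that
      by (simp add: diff_divide_distrib)
  qed (use slope_gt_1 in simp)
  then have "F x - x / L \<le> F y - y / L" using assms by (rule monoD)
  then show "(y - x) / L \<le> F y - F x" by (simp add: diff_divide_distrib)
  have "mono (\<lambda>x. L * x - F x)"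
  proof (rule mono_if_mono_on_period)
    show "L * (x + 1) - F (x + 1) = L * x - F x + (L - 1)" for x
      using add_one[of x] by (simp add: algebra_simps)
    show "L * x - F x \<le> L * y - F y" if "a0 \<le> x" "x \<le> y" "y \<le> a0 + 1" for x y
      using profile_diff_bounds(2)[of "x - a0" "y - a0"] diff[of x y] that
      by (simp add: algebra_simps)
  qed (use slope_gt_1 in simp)
  then have "L * x - F x \<le> L * y - F y" using assms by (rule monoD)
  then show "F y - F x \<le> L * (y - x)" by (simp add: algebra_simps)
qed

lemma strict_mono_F: "strict_mono F"
proof (rule strict_monoI)
  fix x y :: real assume "x < y"
  then have "0 < (y - x) / L" using slope_gt_1 by simp
  then show "F x < F y" using F_diff_bounds(1)[of x y] \<open>x < y\<close> by simp
qed

lemma lipschitz_F: "L-lipschitz_on UNIV F"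
proof (rule lipschitz_onI)
  have bound: "\<bar>F y - F x\<bar> \<le> L * \<bar>y - x\<bar>" if "x \<le> y" for x y
  proof -
    have "0 \<le> (y - x) / L" using that slope_gt_1 by simp
    then show ?thesis using F_diff_bounds[OF that] that by simp
  qed
  show "dist (F x) (F y) \<le> L * dist x y" for x y
    using bound[of x y] bound[of y x] by (cases "x \<le> y") (simp_all add: dist_real_def abs_minus_commute)
qed (use slope_gt_1 in simp)

sublocale circle_lift F
  using strict_mono_F add_one lipschitz_on_continuous_on[OF lipschitz_F] by unfold_locales

text \<open>The relation \<open>f(a\<^sub>j) = -a\<^sub>j\<close> says that the break points are fixed points of \<open>K\<close>
  modulo \<open>1\<close>.\<close>

definition K where "K x = - F x"

lemma K_K: "K (K x) = x"
proof -
  obtain k t where x: "x = a0 + of_int k + t" "0 \<le> t" "t < 1" by (rule period_decompose)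
  then have t: "t \<in> {0..1}" by simp
  have "K x = a0 + of_int (- m0 - k - 1) + (1 - trap_profile L t)"
    using F_on_period[OF t, of k] x(1) by (simp add: K_def)
  then have "F (K x) = of_int (- k - 1) - a0 + (1 - t)"
    using F_on_period[OF profile_reflect(1)[OF t], of "- m0 - k - 1"] profile_reflect(2)[OF t]
    by simp
  then show ?thesis using x(1) by (simp add: K_def)
qed

lemma F_K: "F (K x) = - x"
  using K_K[of x] by (simp add: K_def)

lemma K_add_of_int: "K (x + of_int k) = K x - of_int k"
  by (simp add: K_def F_add_of_int)

lemma iter_K_iter: "(F ^^ m) (K ((F ^^ m) x)) = K x"
proof (induction m)
  case (Suc m)
  have outer: "(F ^^ Suc m) z = (F ^^ m) (F z)" for z
    by (simp add: funpow_Suc_right del: funpow.simps)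
  have "(F ^^ Suc m) (K ((F ^^ Suc m) x)) = (F ^^ m) (F (K (F ((F ^^ m) x))))"
    using outer[of "K ((F ^^ Suc m) x)"] by simp
  also have "F (K (F ((F ^^ m) x))) = K ((F ^^ m) x)" using F_K[of "F ((F ^^ m) x)"] by (simp add: K_def)
  finally show ?case using Suc by simp
qed simp

definition is_break :: "real \<Rightarrow> bool" where
  "is_break x \<longleftrightarrow> (\<exists>k::int. x = a0 + of_int k \<or> x = a0 + d + of_int k)"

lemma is_break_if_F_add_self_Ints:
  assumes "F y + y \<in> \<int>"
  shows "is_break y"
proof -
  obtain k t where y: "y = a0 + of_int k + t" "0 \<le> t" "t < 1" by (rule period_decompose)
  have "F y + y = of_int (m0 + 2 * k) + (trap_profile L t + t)"
    using F_on_period[of t k] y by simp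
  then have "trap_profile L t + t = (F y + y) - of_int (m0 + 2 * k)" by simp
  also have "\<dots> \<in> \<int>" using assms by (intro Ints_diff) simp_all
  finally have "t = 0 \<or> t = d" using profile_add_self_Ints y(2,3) by blast
  then show ?thesis unfolding is_break_def using y(1) by (auto simp: algebra_simps)
qed

lemma F_add_self_a0: "F a0 + a0 = of_int m0"
  using on_period[of 0] profile_first[of 0] d_pos by simp

lemma F_add_self_a0_d: "F (a0 + d) + (a0 + d) = of_int (m0 + 1)"
  using on_period[of d] d_pos d_less_1 L_mult_d by (simp add: profile_first)

lemma F_first_piece:
  assumes "a0 + of_int k \<le> z" "z \<le> a0 + of_int k + d"
  shows "F z = of_int (m0 + k) - a0 + L * (z - a0 - of_int k)"
  using F_on_period[of "z - a0 - of_int k" k] assms d_less_1 by (simp add: profile_first)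

lemma F_second_piece:
  assumes "a0 + of_int k + d \<le> z" "z \<le> a0 + of_int k + 1"
  shows "F z = of_int (m0 + k) - a0 + 1 - (a0 + of_int k + 1 - z) / L"
  using F_on_period[of "z - a0 - of_int k" k] assms d_pos by (simp add: profile_second algebra_simps)

lemma has_slope_on_first_piece: "has_slope_on F {a0 + of_int k..a0 + of_int k + d} L"
  unfolding has_slope_on_def
proof (intro ballI)
  fix z w assume "z \<in> {a0 + of_int k..a0 + of_int k + d}" "w \<in> {a0 + of_int k..a0 + of_int k + d}"
  then show "F w - F z = L * (w - z)"
    using F_first_piece[of k z] F_first_piece[of k w] by (simp add: algebra_simps)
qed

lemma has_slope_on_second_piece: "has_slope_on F {a0 + of_int k + d..a0 + of_int k + 1} (1 / L)"
  unfolding has_slope_on_def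
proof (intro ballI)
  fix z w assume "z \<in> {a0 + of_int k + d..a0 + of_int k + 1}" "w \<in> {a0 + of_int k + d..a0 + of_int k + 1}"
  then show "F w - F z = 1 / L * (w - z)"
    using F_second_piece[of k z] F_second_piece[of k w] by (simp add: diff_divide_distrib)
qed

lemma has_slope_on_if_no_break:
  assumes "x < y" and no_break: "\<And>z. is_break z \<Longrightarrow> \<not> (x < z \<and> z < y)"
  shows "\<exists>s>0. has_slope_on F {x..y} s"
proof -
  obtain k t where x: "x = a0 + of_int k + t" "0 \<le> t" "t < 1" by (rule period_decompose)
  show ?thesis
  proof (cases "t < d")
    case True
    moreover have "is_break (a0 + d + of_int k)" unfolding is_break_def by blast
    ultimately have "y \<le> a0 + of_int k + d" using no_break[of "a0 + d + of_int k"] x by linarith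
    then have "has_slope_on F {x..y} L" using x
      by (intro has_slope_on_subset[OF has_slope_on_first_piece]) auto
    then show ?thesis using slope_gt_1 by (intro exI[of _ L]) simp
  next
    case False
    moreover have "is_break (a0 + of_int (k + 1))" unfolding is_break_def by blast
    ultimately have "y \<le> a0 + of_int k + 1" using no_break[of "a0 + of_int (k + 1)"] x by simp
    then have "has_slope_on F {x..y} (1 / L)" using x False
      by (intro has_slope_on_subset[OF has_slope_on_second_piece]) auto
    then show ?thesis using slope_gt_1 by (intro exI[of _ "1 / L"]) simp
  qed
qed

lemma right_slope_first_piece: "a0 + of_int k \<le> x \<Longrightarrow> x < a0 + of_int k + d \<Longrightarrow> right_slope F x L"
  by (rule right_slope_if_has_slope_on[OF has_slope_on_subset[OF has_slope_on_first_piece[of k]]]) auto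

lemma right_slope_second_piece:
  "a0 + of_int k + d \<le> x \<Longrightarrow> x < a0 + of_int k + 1 \<Longrightarrow> right_slope F x (1 / L)"
  by (rule right_slope_if_has_slope_on[OF has_slope_on_subset[OF has_slope_on_second_piece[of k]]]) auto

lemma left_slope_first_piece: "a0 + of_int k < x \<Longrightarrow> x \<le> a0 + of_int k + d \<Longrightarrow> left_slope F x L"
  by (rule left_slope_if_has_slope_on[OF has_slope_on_subset[OF has_slope_on_first_piece[of k]]]) auto

lemma left_slope_second_piece:
  "a0 + of_int k + d < x \<Longrightarrow> x \<le> a0 + of_int k + 1 \<Longrightarrow> left_slope F x (1 / L)"
  by (rule left_slope_if_has_slope_on[OF has_slope_on_subset[OF has_slope_on_second_piece[of k]]]) auto

lemma right_slope_F_cases: "right_slope F x L \<or> right_slope F x (1 / L)"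
proof -
  obtain k t where "x = a0 + of_int k + t" "0 \<le> t" "t < 1" by (rule period_decompose)
  then show ?thesis
    using right_slope_first_piece[of k x] right_slope_second_piece[of k x] by linarith
qed

lemma left_slope_F_pos: "\<exists>s>0. left_slope F x s"
proof -
  obtain k t where x: "x = a0 + of_int k + t" "0 \<le> t" "t < 1" by (rule period_decompose)
  consider "t = 0" | "0 < t" "t \<le> d" | "d < t" using x by linarith
  then show ?thesis
  proof cases
    case 1
    then have "left_slope F x (1 / L)"
      using left_slope_second_piece[of "k - 1" x] x d_less_1 by simp
    then show ?thesis using slope_gt_1 by (intro exI[of _ "1 / L"]) simp
  next
    case 2
    then show ?thesis using left_slope_first_piece[of k x] x slope_gt_1 by (intro exI[of _ L]) auto
  next
    case 3
    then have "left_slope F x (1 / L)" using left_slope_second_piece[of k x] x by simp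
    then show ?thesis using slope_gt_1 by (intro exI[of _ "1 / L"]) simp
  qed
qed

lemma right_slope_iter_parity: "\<exists>i::int. right_slope (F ^^ n) x (L powr of_int i) \<and> (even i \<longleftrightarrow> even n)"
proof (induction n)
  case 0
  have "right_slope (\<lambda>z. z) x 1" unfolding right_slope_def has_slope_on_def by (intro exI[of _ 1]) auto
  then show ?case using slope_gt_1 by (intro exI[of _ 0]) simp
next
  case (Suc n)
  then obtain i where i: "right_slope (F ^^ n) x (L powr of_int i)" "even i \<longleftrightarrow> even n" by blast
  have pos: "L powr of_int i > 0" using slope_gt_1 by simp
  from right_slope_F_cases[of "(F ^^ n) x"] show ?case
  proof
    assume "right_slope F ((F ^^ n) x) L"
    then have "right_slope (F ^^ Suc n) x (L powr of_int i * L)"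
      using right_slope_comp[OF i(1) pos] by (simp only: funpow.simps(2))
    moreover have "L powr of_int i * L = L powr of_int (i + 1)" using slope_gt_1 by (simp add: powr_add)
    moreover have "even (i + 1) \<longleftrightarrow> even (Suc n)" using i(2) by simp
    ultimately show ?case by metis
  next
    assume "right_slope F ((F ^^ n) x) (1 / L)"
    then have "right_slope (F ^^ Suc n) x (L powr of_int i * (1 / L))"
      using right_slope_comp[OF i(1) pos] by (simp only: funpow.simps(2))
    moreover have "L powr of_int i * (1 / L) = L powr of_int (i - 1)" using slope_gt_1 by (simp add: powr_diff)
    moreover have "even (i - 1) \<longleftrightarrow> even (Suc n)" using i(2) by simp
    ultimately show ?case by metis
  qed
qed

lemma right_slope_iter_pos: "\<exists>s>0. right_slope (F ^^ n) x s"
proof -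
  obtain i :: int where "right_slope (F ^^ n) x (L powr of_int i)" using right_slope_iter_parity by blast
  then show ?thesis using slope_gt_1 by (intro exI[of _ "L powr of_int i"]) simp
qed

lemma left_slope_iter_pos: "\<exists>s>0. left_slope (F ^^ n) x s"
proof (induction n)
  case 0
  have "left_slope (\<lambda>z. z) x 1" unfolding left_slope_def has_slope_on_def by (intro exI[of _ 1]) auto
  then show ?case by (intro exI[of _ 1]) simp
next
  case (Suc n)
  then obtain s where s: "s > 0" "left_slope (F ^^ n) x s" by blast
  obtain t where t: "t > 0" "left_slope F ((F ^^ n) x) t" using left_slope_F_pos by blast
  have "left_slope (F ^^ Suc n) x (s * t)" using left_slope_comp[OF s(2,1) t(2)] by (simp only: funpow.simps(2))
  then show ?case using s t by (metis mult_pos_pos)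
qed

lemma iter_odd_not_translation:
  assumes "odd q"
  shows "\<exists>x. (F ^^ q) x \<noteq> x + c"
proof (rule ccontr)
  assume "\<not> ?thesis"
  then have "has_slope_on (F ^^ q) {0..1} 1" by (simp add: has_slope_on_def)
  then have "right_slope (F ^^ q) 0 1" by (rule right_slope_if_has_slope_on) simp
  moreover obtain i :: int where "right_slope (F ^^ q) 0 (L powr of_int i)" "even i \<longleftrightarrow> even q"
    using right_slope_iter_parity by blast
  ultimately have "L powr of_int i = 1" "odd i" using right_slope_unique assms by auto
  then show False using slope_gt_1 by simp
qed

lemma has_slope_on_iter_if_no_break:
  assumes "x < y" and no_break: "\<And>i z. i < m \<Longrightarrow> is_break z \<Longrightarrow> \<not> ((F ^^ i) x < z \<and> z < (F ^^ i) y)"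
  shows "\<exists>s>0. has_slope_on (F ^^ m) {x..y} s"
  using no_break
proof (induction m)
  case 0
  then show ?case by (intro exI[of _ 1]) (simp add: has_slope_on_def)
next
  case (Suc m)
  then obtain s where s: "s > 0" "has_slope_on (F ^^ m) {x..y} s" by force
  have "(F ^^ m) x < (F ^^ m) y" using \<open>x < y\<close> iter_less_iff by simp
  then obtain t where t: "t > 0" "has_slope_on F {(F ^^ m) x..(F ^^ m) y} t"
    using has_slope_on_if_no_break Suc.prems by blast
  have "(F ^^ m) ` {x..y} \<subseteq> {(F ^^ m) x..(F ^^ m) y}" using iter_le_iff by auto
  then have "has_slope_on (F \<circ> F ^^ m) {x..y} (s * t)" using s(2) t(2) by (intro has_slope_on_comp)
  then have "has_slope_on (F ^^ Suc m) {x..y} (s * t)" by (simp only: funpow.simps(2))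
  then show ?case using s t by (metis mult_pos_pos)
qed

end

lemma trap_slope_gt_1:
  assumes "0 < \<alpha>" "\<alpha> < \<theta>" "\<theta> < pi / 2"
  shows "trap_slope \<alpha> \<theta> > 1"
proof -
  have "cos \<theta> > 0" "sin \<alpha> > 0" using assms by (auto intro: cos_gt_zero_pi sin_gt_zero)
  moreover have "sin (\<theta> + \<alpha>) - sin (\<theta> - \<alpha>) = 2 * cos \<theta> * sin \<alpha>" by (simp add: sin_add sin_diff)
  ultimately have "sin (\<theta> - \<alpha>) < sin (\<theta> + \<alpha>)" by (smt (verit) mult_pos_pos)
  moreover have "sin (\<theta> - \<alpha>) > 0" using assms by (intro sin_gt_zero) auto
  ultimately show ?thesis by (simp add: trap_slope_def)
qed

text \<open>The two break points of a \<open>trap_lift\<close> are forced to be \<open>1/(\<Lambda> + 1)\<close> apart, since the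
  slopes \<open>\<Lambda>\<close> and \<open>1/\<Lambda>\<close> must raise \<open>F\<close> by exactly \<open>1\<close> over one period.\<close>

lemma trapezoid_lift_if_trap_lift:
  assumes "trap_lift G"
  obtains L a0 m0 where "trapezoid_lift G L a0 m0"
proof -
  obtain \<alpha> \<theta> a0 a1 where h: "0 < \<alpha>" "\<alpha> < \<theta>" "\<theta> < pi / 2" "a0 < a1" "a1 < a0 + 1"
    "\<forall>x. G (x + 1) = G x + 1"
    "\<forall>x\<in>{a0..a1}. G x = G a0 + trap_slope \<alpha> \<theta> * (x - a0)"
    "\<forall>x\<in>{a1..a0+1}. G x = G a1 + (x - a1) / trap_slope \<alpha> \<theta>"
    "G a0 + a0 \<in> \<int>"
    using assms unfolding trap_lift_def by blast
  define L where "L = trap_slope \<alpha> \<theta>"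
  have L: "L > 1" unfolding L_def using h trap_slope_gt_1 by blast
  have "G a1 = G a0 + L * (a1 - a0)" "G (a0 + 1) = G a1 + (a0 + 1 - a1) / L"
    using bspec[OF h(7), of a1] bspec[OF h(8), of "a0 + 1"] h(4,5) by (simp_all add: L_def)
  then have "L * (a1 - a0) + (a0 + 1 - a1) / L = 1" using h(6) by simp
  then have "(L - 1) * ((a1 - a0) * (L + 1) - 1) = 0" using L by (simp add: field_simps)
  then have "(a1 - a0) * (L + 1) = 1" using L by simp
  then have "a1 - a0 = 1 / (L + 1)" using L by (simp add: eq_divide_eq)
  then have a1: "a1 = a0 + 1 / (L + 1)" by simp
  obtain m0 where m0: "G a0 + a0 = of_int m0" using h(9) by (elim Ints_cases)
  have "G (a0 + t) = of_int m0 - a0 + trap_profile L t" if "t \<in> {0..1}" for t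
  proof (cases "t \<le> 1 / (L + 1)")
    case True
    then have "G (a0 + t) = G a0 + L * t" using bspec[OF h(7), of "a0 + t"] that a1 by (simp add: L_def)
    then show ?thesis using True m0 by (simp add: trap_profile_def algebra_simps)
  next
    case False
    have "G a1 = G a0 + L * (1 / (L + 1))" using bspec[OF h(7), of a1] h(4) a1 by (simp add: L_def)
    moreover have "G (a0 + t) = G a1 + (a0 + t - a1) / L"
      using bspec[OF h(8), of "a0 + t"] that False a1 by (simp add: L_def)
    moreover have "L + 1 > 0" "L > 0" using L by simp_all
    then have "L * (1 / (L + 1)) + (t - 1 / (L + 1)) / L = 1 - (1 - t) / L"
      by (simp add: divide_simps) (simp add: algebra_simps)
    ultimately show ?thesis using False m0 a1 by (simp add: trap_profile_def algebra_simps)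
  qed
  then have "trapezoid_lift G L a0 m0" using L h(6) by unfold_locales auto
  then show thesis by (rule that)
qed

section \<open>Even denominators: the iterate is a translation\<close>

locale trapezoid_lift_even_rotnum = trapezoid_lift +
  fixes n :: nat and p :: int
  assumes n_pos: "n \<ge> 1" and coprime: "coprime p (2 * int n)"
    and rotnum_eq: "rotnum F = of_int p / real (2 * n)"
begin

definition periodic_pt :: "real \<Rightarrow> bool" where
  "periodic_pt x \<longleftrightarrow> (F ^^ (2 * n)) x = x + of_int p"

definition gap :: "real \<Rightarrow> real \<Rightarrow> bool" where
  "gap c1 c2 \<longleftrightarrow> c1 < c2 \<and> periodic_pt c1 \<and> periodic_pt c2 \<and> (\<forall>y. c1 < y \<and> y < c2 \<longrightarrow> \<not> periodic_pt y)"

lemma no_shorter_period: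
  assumes "0 < m" "m < 2 * n"
  shows "(F ^^ m) y \<noteq> y + of_int k"
proof
  assume "(F ^^ m) y = y + of_int k"
  then have "of_int k / real m = of_int p / real (2 * n)"
    using rotnum_eq_if_iter_eq[OF assms(1)] rotnum_eq by simp
  then have "of_int (k * (2 * int n)) = (of_int (p * int m) :: real)"
    using assms by (simp add: field_simps)
  then have "2 * int n dvd p * int m" by (metis dvd_triv_right of_int_eq_iff)
  then have "2 * int n dvd int m" using coprime by (simp add: coprime_commute coprime_dvd_mult_right_iff)
  then show False using assms by (auto dest: zdvd_imp_le)
qed

lemma periodic_pt_add_of_int_iff: "periodic_pt (x + of_int k) \<longleftrightarrow> periodic_pt x"
  unfolding periodic_pt_def by (simp add: iter_add_of_int)

lemma periodic_pt_iter_iff: "periodic_pt ((F ^^ m) x) \<longleftrightarrow> periodic_pt x"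
proof -
  have "(F ^^ (2 * n)) ((F ^^ m) x) = (F ^^ m) ((F ^^ (2 * n)) x)"
    by (metis add.commute comp_apply funpow_add)
  moreover have "(F ^^ m) x + of_int p = (F ^^ m) (x + of_int p)" by (simp add: iter_add_of_int)
  ultimately show ?thesis unfolding periodic_pt_def by (simp add: iter_eq_iff)
qed

lemma periodic_pt_K: "periodic_pt x \<Longrightarrow> periodic_pt (K x)"
  unfolding periodic_pt_def
  using iter_K_iter[of "2 * n" x] iter_add_of_int[of "2 * n" "K x" "- p"] K_add_of_int[of x p]
  by simp

lemma closed_periodic_pts: "closed {x. periodic_pt x}"
  unfolding periodic_pt_def by (intro closed_Collect_eq continuous_intros continuous_on_iter)

lemma gap_exists:
  assumes "\<not> periodic_pt z"
  obtains c1 c2 where "gap c1 c2" "c1 < z" "z < c2"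
proof -
  obtain x0 where x0: "periodic_pt x0"
    using periodic_point_if_rotnum_eq[of "2 * n" p] rotnum_eq n_pos unfolding periodic_pt_def by auto
  define S T where "S = {c. periodic_pt c \<and> c \<le> z}" and "T = {c. periodic_pt c \<and> z \<le> c}"
  have "periodic_pt (x0 + of_int (- \<lceil>x0 - z\<rceil>))" "periodic_pt (x0 + of_int \<lceil>z - x0\<rceil>)"
    using x0 periodic_pt_add_of_int_iff by blast+
  moreover have "x0 + of_int (- \<lceil>x0 - z\<rceil>) \<le> z" "z \<le> x0 + of_int \<lceil>z - x0\<rceil>"
    unfolding of_int_minus using le_of_int_ceiling[of "x0 - z"] le_of_int_ceiling[of "z - x0"]
    by linarith+
  ultimately have ne: "S \<noteq> {}" "T \<noteq> {}" unfolding S_def T_def by blast+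
  have closed: "closed S" "closed T"
    using closed_Int[OF closed_periodic_pts closed_atMost[of z]]
      closed_Int[OF closed_periodic_pts closed_atLeast[of z]]
    by (simp_all add: S_def T_def Collect_conj_eq atMost_def atLeast_def)
  have bdd: "bdd_above S" "bdd_below T" unfolding S_def T_def by (auto intro: bdd_aboveI bdd_belowI)
  have "Sup S \<in> S" by (rule closed_contains_Sup[OF ne(1) bdd(1) closed(1)])
  then have c1: "periodic_pt (Sup S)" "Sup S < z" using assms unfolding S_def by (auto simp: order.order_iff_strict)
  have "Inf T \<in> T" by (rule closed_contains_Inf[OF ne(2) bdd(2) closed(2)])
  then have c2: "periodic_pt (Inf T)" "z < Inf T" using assms unfolding T_def by (auto simp: order.order_iff_strict)
  have "\<not> periodic_pt y" if "Sup S < y" "y < Inf T" for y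
  proof
    assume "periodic_pt y"
    then have "y \<in> S \<or> y \<in> T" unfolding S_def T_def by auto
    then show False using that cSup_upper[OF _ bdd(1), of y] cInf_lower[OF _ bdd(2), of y] by auto
  qed
  then have "gap (Sup S) (Inf T)" using c1 c2 unfolding gap_def by auto
  then show thesis using that c1(2) c2(2) by blast
qed

lemma gap_unique:
  assumes "gap c1 c2" "gap e1 e2" "c1 < z" "z < c2" "e1 < z" "z < e2"
  shows "c1 = e1" "c2 = e2"
  using assms unfolding gap_def by (meson less_trans linorder_neqE_linordered_idom)+

lemma gap_iter:
  assumes gap: "gap c1 c2"
  shows "gap ((F ^^ m) c1) ((F ^^ m) c2)"
proof -
  have c: "c1 < c2" "periodic_pt c1" "periodic_pt c2" using gap by (auto simp: gap_def)
  have "\<not> periodic_pt y" if y: "(F ^^ m) c1 < y" "y < (F ^^ m) c2" for y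
  proof
    assume "periodic_pt y"
    have "continuous_on {c1..c2} (F ^^ m)" using continuous_on_iter by (rule continuous_on_subset) simp
    then obtain x where x: "c1 \<le> x" "x \<le> c2" "(F ^^ m) x = y"
      using IVT'[of "F ^^ m" c1 y c2] y c by auto
    then have "c1 < x" "x < c2" using y by (auto simp: order.order_iff_strict)
    moreover have "periodic_pt x" using \<open>periodic_pt y\<close> x periodic_pt_iter_iff by blast
    ultimately show False using gap by (auto simp: gap_def)
  qed
  then show ?thesis using c iter_less_iff periodic_pt_iter_iff by (auto simp: gap_def)
qed

lemma gap_K:
  assumes gap: "gap c1 c2"
  shows "gap (K c2) (K c1)"
proof -
  have c: "c1 < c2" "periodic_pt c1" "periodic_pt c2" using gap by (auto simp: gap_def)
  have K_less_iff: "K x < K y \<longleftrightarrow> y < x" for x y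
    unfolding K_def using iter_less_iff[of 1] by simp
  have "\<not> periodic_pt y" if "K c2 < y" "y < K c1" for y
  proof
    assume "periodic_pt y"
    then have "periodic_pt (K y)" by (rule periodic_pt_K)
    moreover have "c1 < K y" "K y < c2" using that K_less_iff[of c2 "K y"] K_less_iff[of "K y" c1]
      by (simp_all add: K_K)
    ultimately show False using gap by (auto simp: gap_def)
  qed
  then show ?thesis using c K_less_iff periodic_pt_K by (auto simp: gap_def)
qed

lemma gap_add_of_int:
  assumes "gap c1 c2"
  shows "gap (c1 + of_int k) (c2 + of_int k)"
proof -
  have "\<not> periodic_pt y" if "c1 + of_int k < y" "y < c2 + of_int k" for y
    using assms that periodic_pt_add_of_int_iff[of y "- k"] by (auto simp: gap_def)
  then show ?thesis using assms periodic_pt_add_of_int_iff by (auto simp: gap_def)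
qed

text \<open>Two such translates would make the gap and its \<open>i\<close>-th image translates of each other,
  giving a periodic point of period \<open>i < 2n\<close>.\<close>

lemma gap_iter_disjoint_translates:
  assumes gap: "gap c1 c2" and x: "c1 < x" "x < c2" and i: "0 < i" "i < 2 * n"
    and in_image: "(F ^^ i) c1 < x + of_int k" "x + of_int k < (F ^^ i) c2"
  shows False
proof -
  have "(F ^^ i) c1 = c1 + of_int k"
    using gap_unique(1)[OF gap_iter[OF gap] gap_add_of_int[OF gap] in_image] x by simp
  then show False using no_shorter_period[OF i] by blast
qed

lemma F_add_self_iter_half:
  assumes "periodic_pt y" "F y + y = of_int j"
  shows "F ((F ^^ n) y) + (F ^^ n) y = of_int (p + j)"
proof -
  define w where "w = (F ^^ n) y"
  have "(F ^^ n) (K w) = y - of_int j" using iter_K_iter[of n y] assms(2) by (simp add: w_def K_def)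
  moreover have "(F ^^ n) w = y + of_int p"
    using assms(1) by (simp add: w_def periodic_pt_def mult_2 funpow_add)
  then have "(F ^^ n) (w + of_int (- (p + j))) = y - of_int j"
    using iter_add_of_int[of n w "- (p + j)"] by simp
  ultimately have "K w = w + of_int (- (p + j))" using iter_eq_iff by metis
  then show ?thesis by (simp add: w_def K_def)
qed

lemma periodic_pt_a0_iff: "periodic_pt a0 \<longleftrightarrow> periodic_pt (a0 + d)"
proof -
  have n: "0 < n" "n < 2 * n" using n_pos by auto
  have "periodic_pt (a0 + d)" if "periodic_pt a0"
  proof -
    have "is_break ((F ^^ n) a0)"
      using F_add_self_iter_half[OF that F_add_self_a0] by (intro is_break_if_F_add_self_Ints) simp
    then obtain k where "(F ^^ n) a0 = a0 + d + of_int k"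
      using no_shorter_period[OF n] unfolding is_break_def by blast
    then show ?thesis using periodic_pt_iter_iff[of n a0] that periodic_pt_add_of_int_iff by simp
  qed
  moreover have "periodic_pt a0" if "periodic_pt (a0 + d)"
  proof -
    have "is_break ((F ^^ n) (a0 + d))"
      using F_add_self_iter_half[OF that F_add_self_a0_d] by (intro is_break_if_F_add_self_Ints) simp
    then obtain k where "(F ^^ n) (a0 + d) = a0 + of_int k"
      using no_shorter_period[OF n] unfolding is_break_def by blast
    then show ?thesis using periodic_pt_iter_iff[of n "a0 + d"] that periodic_pt_add_of_int_iff
      by (metis add_0 of_int_0)
  qed
  ultimately show ?thesis by blast
qed

lemma all_periodic_if_a0_periodic:
  assumes "periodic_pt a0"
  shows "periodic_pt z"
proof (rule ccontr)
  assume "\<not> periodic_pt z"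
  then obtain c1 c2 where gap: "gap c1 c2" "c1 < z" "z < c2" by (rule gap_exists)
  have breaks: "periodic_pt b" if "is_break b" for b
    using that assms periodic_pt_a0_iff periodic_pt_add_of_int_iff unfolding is_break_def by auto
  have "\<exists>s>0. has_slope_on (F ^^ (2 * n)) {c1..c2} s"
  proof (rule has_slope_on_iter_if_no_break)
    show "c1 < c2" using gap by (simp add: gap_def)
    show "\<not> ((F ^^ i) c1 < b \<and> b < (F ^^ i) c2)" if "is_break b" for i b
      using gap_iter[OF gap(1), of i] breaks[OF that] by (auto simp: gap_def)
  qed
  then obtain s where s: "has_slope_on (F ^^ (2 * n)) {c1..c2} s" by blast
  have ends: "periodic_pt c1" "periodic_pt c2" "c1 < c2" using gap by (auto simp: gap_def)
  then have "s = 1" using has_slope_on_const_imp_eq[OF s] by (simp add: periodic_pt_def)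
  then have "periodic_pt z" using has_slope_onD[OF s, of c1 z] gap ends(1) by (simp add: periodic_pt_def)
  then show False using \<open>\<not> periodic_pt z\<close> by blast
qed

text \<open>The case where neither break point is periodic, ruled out by contradiction: \<open>(c\<^sub>1, c\<^sub>2)\<close> is
  the gap around \<open>a\<^sub>0\<close>.\<close>

context
  fixes c1 c2 :: real
  assumes gap_c: "gap c1 c2" and c1_a0: "c1 < a0" and a0_c2: "a0 < c2"
    and a0_d_not_periodic: "\<not> periodic_pt (a0 + d)"
begin

abbreviation "d1 \<equiv> (F ^^ n) c1"
abbreviation "d2 \<equiv> (F ^^ n) c2"

lemma n_bounds: "0 < n" "n < 2 * n" using n_pos by simp_all

lemma gap_d: "gap d1 d2" using gap_iter[OF gap_c] .

lemma iter_d1: "(F ^^ n) d1 = c1 + of_int p" and iter_d2: "(F ^^ n) d2 = c2 + of_int p"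
  using gap_c by (simp_all add: gap_def periodic_pt_def mult_2 funpow_add)

lemma K_gap_a0: "K c2 = c1 - of_int m0" "K c1 = c2 - of_int m0"
proof -
  have "F c1 < F a0" "F a0 < F c2" using strict_monoD[OF strict_mono_F] c1_a0 a0_c2 by auto
  then have "K c2 < a0 - of_int m0" "a0 - of_int m0 < K c1" using F_add_self_a0 by (simp_all add: K_def)
  then show "K c2 = c1 - of_int m0" "K c1 = c2 - of_int m0"
    using gap_unique[OF gap_K[OF gap_c] gap_add_of_int[OF gap_c, of "- m0"], of "a0 - of_int m0"]
      c1_a0 a0_c2 by simp_all
qed

lemma K_gap_d: "K d1 = d2 - of_int (p + m0)" "K d2 = d1 - of_int (p + m0)"
proof -
  have "(F ^^ n) (K d1) = (F ^^ n) (d2 - of_int (p + m0))"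
    using iter_K_iter[of n c1] K_gap_a0 iter_diff_of_int[of n d2 "p + m0"] iter_d2 by simp
  then show "K d1 = d2 - of_int (p + m0)" by (simp add: iter_eq_iff)
  have "(F ^^ n) (K d2) = (F ^^ n) (d1 - of_int (p + m0))"
    using iter_K_iter[of n c2] K_gap_a0 iter_diff_of_int[of n d1 "p + m0"] iter_d1 by simp
  then show "K d2 = d1 - of_int (p + m0)" by (simp add: iter_eq_iff)
qed

lemma no_a0_translate_in_gap_d: "\<not> (d1 < a0 + of_int j \<and> a0 + of_int j < d2)"
  using gap_iter_disjoint_translates[OF gap_c c1_a0 a0_c2 n_bounds] by blast

text \<open>\<open>K\<close> maps the gap \<open>(d\<^sub>1, d\<^sub>2)\<close> onto an integer translate of itself, so it has a fixed point
  there modulo \<open>\<int>\<close>, which must be a break point.\<close>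

lemma break_in_gap_d:
  obtains k where "a0 + of_int k < d1" "d1 < a0 + d + of_int k" "a0 + d + of_int k < d2"
    "d2 < a0 + of_int k + 1"
proof -
  define M where "M = p + m0"
  define g where "g x = K x + of_int M - x" for x
  have d12: "d1 < d2" using gap_d by (simp add: gap_def)
  have "continuous_on {d1..d2} g"
    unfolding g_def K_def by (intro continuous_intros continuous_on_subset[OF cont]) simp
  moreover have "g d2 < 0" "0 < g d1" using K_gap_d d12 by (simp_all add: g_def M_def)
  ultimately obtain x where x: "d1 \<le> x" "x \<le> d2" "g x = 0"
    using IVT2'[of g d2 0 d1] d12 by auto
  then have x_in: "d1 < x" "x < d2" using \<open>g d2 < 0\<close> \<open>0 < g d1\<close> by (auto simp: order.order_iff_strict)
  have "F x + x = of_int M" using x(3) by (simp add: g_def K_def)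
  then have "is_break x" by (intro is_break_if_F_add_self_Ints) simp
  then obtain k where xk: "x = a0 + d + of_int k"
    using no_a0_translate_in_gap_d x_in unfolding is_break_def by blast
  have not_periodic: "\<not> periodic_pt (a0 + of_int j)" for j
    using gap_c c1_a0 a0_c2 periodic_pt_add_of_int_iff unfolding gap_def by auto
  have "d1 \<noteq> a0 + of_int k" "d2 \<noteq> a0 + of_int (k + 1)"
    using gap_d not_periodic unfolding gap_def by metis+
  then show thesis
    using that[of k] no_a0_translate_in_gap_d[of k] no_a0_translate_in_gap_d[of "k + 1"]
      xk x_in d_pos d_less_1 by fastforce
qed

lemma c1_in_second_piece: "a0 - 1 + d < c1"
proof (rule ccontr)
  assume "\<not> ?thesis"
  moreover have "c1 \<noteq> a0 + d + of_int (- 1)"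
    using gap_c a0_d_not_periodic periodic_pt_add_of_int_iff unfolding gap_def by metis
  ultimately have "c1 < a0 + d + of_int (- 1)" by simp
  moreover obtain k where k: "d1 < a0 + d + of_int k" "a0 + d + of_int k < d2"
    using break_in_gap_d by metis
  moreover have "a0 + d + of_int (- 1) < c2" using a0_c2 d_less_1 by simp
  ultimately show False
    using gap_iter_disjoint_translates[OF gap_d k n_bounds, of "p - 1 - k"] iter_d1 iter_d2
    by (simp add: algebra_simps)
qed

lemma has_slope_on_iter_pred_image_gap: "\<exists>s>0. has_slope_on (F ^^ (n - 1)) {F d1..F d2} s"
proof (rule has_slope_on_iter_if_no_break)
  show "F d1 < F d2" using gap_d strict_monoD[OF strict_mono_F] by (simp add: gap_def)
  obtain k where k: "d1 < a0 + d + of_int k" "a0 + d + of_int k < d2"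
    using break_in_gap_d by metis
  fix i b assume i: "i < n - 1" and "is_break b"
  then have i_bounds: "0 < Suc i + n" "Suc i + n < 2 * n" "0 < Suc i" "Suc i < 2 * n" by auto
  have iter_c: "(F ^^ i) (F d1) = (F ^^ (Suc i + n)) c1" "(F ^^ i) (F d2) = (F ^^ (Suc i + n)) c2"
    by (simp_all only: funpow_add funpow_Suc_right comp_apply)
  have iter_d: "(F ^^ i) (F d1) = (F ^^ Suc i) d1" "(F ^^ i) (F d2) = (F ^^ Suc i) d2"
    by (simp_all only: funpow_Suc_right comp_apply)
  from \<open>is_break b\<close> obtain j where "b = a0 + of_int j \<or> b = a0 + d + of_int j"
    unfolding is_break_def by blast
  then show "\<not> ((F ^^ i) (F d1) < b \<and> b < (F ^^ i) (F d2))"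
  proof
    assume "b = a0 + of_int j"
    then show ?thesis
      using gap_iter_disjoint_translates[OF gap_c c1_a0 a0_c2 i_bounds(1,2), of j] iter_c by auto
  next
    assume "b = a0 + d + of_int j"
    then show ?thesis
      using gap_iter_disjoint_translates[OF gap_d k i_bounds(3,4), of "j - k"] iter_d
      by (auto simp: algebra_simps)
  qed
qed

lemma slopes_at_gap_ends:
  shows "right_slope K c1 (- (1 / L))" "right_slope K d1 (- L)" "right_slope F d1 L"
    "left_slope F d2 (1 / L)"
proof -
  obtain k where k: "a0 + of_int k < d1" "d1 < a0 + d + of_int k" "a0 + d + of_int k < d2"
    "d2 < a0 + of_int k + 1"
    using break_in_gap_d by blast
  show "right_slope K c1 (- (1 / L))"
    using right_slope_uminus[OF right_slope_second_piece[of "- 1" c1]] c1_in_second_piece c1_a0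
    unfolding K_def[abs_def] by (simp add: algebra_simps)
  show F_d1: "right_slope F d1 L" using right_slope_first_piece[of k d1] k by simp
  show "right_slope K d1 (- L)" using right_slope_uminus[OF F_d1] unfolding K_def[abs_def] by simp
  show "left_slope F d2 (1 / L)" using left_slope_second_piece[of k d2] k by simp
qed

text \<open>The right slope of \<open>K\<close> at \<open>c\<^sub>1\<close>, computed along \<open>K = F\<^sup>n \<circ> K \<circ> F\<^sup>n\<close>.\<close>

lemma slope_relation_at_c1:
  assumes \<sigma>: "right_slope (F ^^ n) c1 \<sigma>" "\<sigma> > 0" and \<tau>: "left_slope (F ^^ n) (K d1) \<tau>"
  shows "\<sigma> * L * \<tau> = 1 / L"
proof -
  have "right_slope (K \<circ> F ^^ n) c1 (\<sigma> * - L)" using right_slope_comp[OF \<sigma> slopes_at_gap_ends(2)] .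
  moreover have "\<sigma> * - L < 0" using \<sigma>(2) slope_gt_1 by (simp add: mult_pos_neg)
  moreover have "left_slope (F ^^ n) ((K \<circ> F ^^ n) c1) \<tau>" using \<tau> by simp
  ultimately have "right_slope (F ^^ n \<circ> (K \<circ> F ^^ n)) c1 (\<sigma> * - L * \<tau>)"
    by (rule right_slope_comp_decreasing)
  moreover have "F ^^ n \<circ> (K \<circ> F ^^ n) = K" using iter_K_iter by (simp add: fun_eq_iff)
  ultimately show ?thesis using right_slope_unique slopes_at_gap_ends(1) by fastforce
qed

lemma slopes_iter_image_gap:
  obtains s where "s > 0" "right_slope (F ^^ n) d1 (L * s)" "left_slope (F ^^ n) d2 (s / L)"
proof -
  obtain s where s: "s > 0" "has_slope_on (F ^^ (n - 1)) {F d1..F d2} s"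
    using has_slope_on_iter_pred_image_gap by blast
  have F_d12: "F d1 < F d2" using gap_d strict_monoD[OF strict_mono_F] by (simp add: gap_def)
  have split: "F ^^ n = F ^^ (n - 1) \<circ> F" using n_pos by (metis Suc_diff_1 funpow_Suc_right n_bounds(1))
  have L: "L > 0" "1 / L > 0" using slope_gt_1 by simp_all
  have "right_slope (F ^^ n) d1 (L * s)"
    using right_slope_comp[OF slopes_at_gap_ends(3) L(1) right_slope_if_has_slope_on[OF s(2) F_d12]]
    unfolding split[symmetric] .
  moreover have "left_slope (F ^^ n) d2 (1 / L * s)"
    using left_slope_comp[OF slopes_at_gap_ends(4) L(2) left_slope_if_has_slope_on[OF s(2) F_d12]]
    unfolding split[symmetric] .
  ultimately show thesis using that s(1) by simp
qed

lemma right_slope_iter_2n_c1: "right_slope (F ^^ (2 * n)) c1 1"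
proof -
  obtain \<sigma> where \<sigma>: "\<sigma> > 0" "right_slope (F ^^ n) c1 \<sigma>" using right_slope_iter_pos by blast
  obtain \<tau> where \<tau>: "left_slope (F ^^ n) (K d1) \<tau>" using left_slope_iter_pos by blast
  obtain s where s: "right_slope (F ^^ n) d1 (L * s)" "left_slope (F ^^ n) d2 (s / L)"
    by (rule slopes_iter_image_gap)
  have "left_slope (F ^^ n) d2 \<tau>"
    using left_slope_translate[OF \<tau> iter_add_of_int[of n _ "p + m0"]] K_gap_d(1) by simp
  then have "\<tau> = s / L" using s(2) by (rule left_slope_unique)
  then have "\<sigma> * (L * s) = L * (\<sigma> * L * \<tau>)" using slope_gt_1 by (simp add: field_simps)
  also have "\<dots> = 1" using slope_relation_at_c1[OF \<sigma>(2,1) \<tau>] slope_gt_1 by simp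
  finally have "\<sigma> * (L * s) = 1" .
  moreover have "right_slope (F ^^ n \<circ> F ^^ n) c1 (\<sigma> * (L * s))"
    using right_slope_comp[OF \<sigma>(2,1)] s(1) by simp
  moreover have "F ^^ n \<circ> F ^^ n = F ^^ (2 * n)" by (simp add: funpow_add[symmetric] mult_2)
  ultimately show ?thesis by simp
qed

lemma gap_around_a0_absurd: False
proof -
  obtain e where e: "e > 0" "has_slope_on (F ^^ (2 * n)) {c1..c1 + e} 1"
    using right_slope_iter_2n_c1 unfolding right_slope_def by blast
  define h where "h = min e (c2 - c1) / 2"
  have "c1 < c2" using gap_c by (simp add: gap_def)
  then have h: "0 < h" "h \<le> e" "c1 + h < c2" unfolding h_def using e(1) by (auto simp: min_def field_simps)
  then have "periodic_pt (c1 + h)"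
    using has_slope_onD[OF e(2), of c1 "c1 + h"] gap_c by (simp add: gap_def periodic_pt_def)
  then show False using gap_c h by (auto simp: gap_def)
qed

end

lemma periodic_pt_a0: "periodic_pt a0"
proof (rule ccontr)
  assume "\<not> periodic_pt a0"
  moreover obtain c1 c2 where "gap c1 c2" "c1 < a0" "a0 < c2" using gap_exists calculation by blast
  ultimately show False using gap_around_a0_absurd periodic_pt_a0_iff by blast
qed

theorem iter_translation: "(F ^^ (2 * n)) x = x + of_int p"
  using all_periodic_if_a0_periodic[OF periodic_pt_a0] by (simp add: periodic_pt_def)

end

section \<open>Monotone families\<close>

lemma odd_denominator_nat:
  assumes "odd (q :: int)" "c = of_int p / of_int q"
  obtains p' and q' :: nat where "odd q'" "c = of_int p' / real q'"
proof (cases "q > 0")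
  case True
  then show thesis using that[of "nat q" p] assms by (simp add: even_nat_iff)
next
  case False
  then have "q < 0" using assms(1) by (cases "q = 0") auto
  moreover have "c = of_int (- p) / of_int (- q)" using assms(2) by simp
  ultimately show thesis using that[of "nat (- q)" "- p"] assms(1) by (simp add: even_nat_iff)
qed

locale trapezoid_family =
  fixes F :: "real \<Rightarrow> real \<Rightarrow> real" and u1 u2 :: real
  assumes u1_less_u2: "u1 < u2"
    and trap_type: "\<forall>u\<in>{u1..u2}. trap_lift (F u)"
    and uniform_cont: "\<forall>u\<in>{u1..u2}. \<forall>\<epsilon>>0. \<exists>\<delta>>0. \<forall>v\<in>{u1..u2}.
                 \<bar>v - u\<bar> < \<delta> \<longrightarrow> (\<forall>x. \<bar>F v x - F u x\<bar> \<le> \<epsilon>)"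
    and strict_incr: "\<forall>x. \<forall>u\<in>{u1..u2}. \<forall>v\<in>{u1..u2}. u < v \<longrightarrow> F u x < F v x"
begin

abbreviation \<rho> :: "real \<Rightarrow> real" where "\<rho> u \<equiv> rotnum (F u)"

lemma trapezoid_lift_member:
  assumes "u \<in> {u1..u2}"
  obtains L a0 m0 where "trapezoid_lift (F u) L a0 m0"
  using trapezoid_lift_if_trap_lift trap_type assms by blast

lemma circle_lift_member: "u \<in> {u1..u2} \<Longrightarrow> circle_lift (F u)"
proof -
  assume "u \<in> {u1..u2}"
  then obtain L a0 m0 where "trapezoid_lift (F u) L a0 m0" by (rule trapezoid_lift_member)
  then interpret trapezoid_lift "F u" L a0 m0 .
  show "circle_lift (F u)" by unfold_locales (use strict_mono add_one cont in auto)
qed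

lemma mono_on_rotnum: "mono_on {u1..u2} \<rho>"
proof (rule mono_onI)
  fix u v assume uv: "u \<in> {u1..u2}" "v \<in> {u1..u2}" "u \<le> v"
  then have "F u x \<le> F v x" for x using strict_incr by (cases "u = v") (auto intro: less_imp_le)
  then show "\<rho> u \<le> \<rho> v" using rotnum_mono circle_lift_member uv by blast
qed

lemma rotnum_eq_between:
  assumes "u \<in> {u1..u2}" "v \<in> {u1..u2}" "u \<le> w" "w \<le> v" "\<rho> u = \<rho> v"
  shows "\<rho> w = \<rho> u"
  using mono_onD[OF mono_on_rotnum, of u w] mono_onD[OF mono_on_rotnum, of w v] assms by auto

lemma iter_continuous_parameter:
  assumes u: "u \<in> {u1..u2}" and "\<epsilon> > 0"
  shows "\<exists>\<delta>>0. \<forall>v\<in>{u1..u2}. \<bar>v - u\<bar> < \<delta> \<longrightarrow> \<bar>(F v ^^ k) x - (F u ^^ k) x\<bar> < \<epsilon>"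
  using \<open>\<epsilon> > 0\<close>
proof (induction k arbitrary: \<epsilon>)
  case 0
  then show ?case by (intro exI[of _ 1]) simp
next
  case (Suc k)
  define y where "y = (F u ^^ k) x"
  interpret G: circle_lift "F u" using circle_lift_member[OF u] .
  have half: "\<epsilon> / 2 > 0" using Suc.prems by simp
  then have "\<exists>\<eta>>0. \<forall>y'\<in>UNIV. dist y' y < \<eta> \<longrightarrow> dist (F u y') (F u y) < \<epsilon> / 2"
    using G.cont unfolding continuous_on_iff by blast
  then obtain \<eta> where \<eta>: "\<eta> > 0" "\<And>y'. \<bar>y' - y\<bar> < \<eta> \<Longrightarrow> \<bar>F u y' - F u y\<bar> < \<epsilon> / 2"
    by (auto simp: dist_real_def)
  obtain \<delta>1 where \<delta>1: "\<delta>1 > 0" "\<forall>v\<in>{u1..u2}. \<bar>v - u\<bar> < \<delta>1 \<longrightarrow> \<bar>(F v ^^ k) x - y\<bar> < \<eta>"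
    using Suc.IH[OF \<eta>(1)] by (auto simp: y_def)
  obtain \<delta>2 where \<delta>2: "\<delta>2 > 0" "\<forall>v\<in>{u1..u2}. \<bar>v - u\<bar> < \<delta>2 \<longrightarrow> (\<forall>x. \<bar>F v x - F u x\<bar> \<le> \<epsilon> / 2)"
    using uniform_cont u half by blast
  have "\<bar>F v ((F v ^^ k) x) - F u y\<bar> < \<epsilon>" if "v \<in> {u1..u2}" "\<bar>v - u\<bar> < min \<delta>1 \<delta>2" for v
  proof -
    have "\<bar>(F v ^^ k) x - y\<bar> < \<eta>" using \<delta>1(2) that by simp
    then have "\<bar>F u ((F v ^^ k) x) - F u y\<bar> < \<epsilon> / 2" by (rule \<eta>(2))
    moreover have "\<bar>F v ((F v ^^ k) x) - F u ((F v ^^ k) x)\<bar> \<le> \<epsilon> / 2" using \<delta>2(2) that by simp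
    ultimately show ?thesis by linarith
  qed
  then show ?case using \<delta>1(1) \<delta>2(1) by (intro exI[of _ "min \<delta>1 \<delta>2"]) (simp add: y_def)
qed

lemma rotnum_ge_near:
  assumes u: "u \<in> {u1..u2}" and "q > 0" and gt: "x + of_int p < (F u ^^ q) x"
  obtains \<delta> where "\<delta> > 0" "\<And>v. v \<in> {u1..u2} \<Longrightarrow> \<bar>v - u\<bar> < \<delta> \<Longrightarrow> of_int p / q \<le> \<rho> v"
proof -
  have "(F u ^^ q) x - (x + of_int p) > 0" using gt by simp
  from iter_continuous_parameter[OF u this, where k = q and x = x] obtain \<delta> where \<delta>: "\<delta> > 0"
    "\<forall>v\<in>{u1..u2}. \<bar>v - u\<bar> < \<delta> \<longrightarrow> \<bar>(F v ^^ q) x - (F u ^^ q) x\<bar> < (F u ^^ q) x - (x + of_int p)"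
    by blast
  have "of_int p / q \<le> \<rho> v" if "v \<in> {u1..u2}" "\<bar>v - u\<bar> < \<delta>" for v
    using circle_lift.rotnum_ge_if_iter_ge[OF circle_lift_member[OF that(1)] \<open>q > 0\<close>, of x p]
      \<delta>(2) that by fastforce
  then show thesis using that \<delta>(1) by blast
qed

lemma rotnum_le_near:
  assumes u: "u \<in> {u1..u2}" and "q > 0" and lt: "(F u ^^ q) x < x + of_int p"
  obtains \<delta> where "\<delta> > 0" "\<And>v. v \<in> {u1..u2} \<Longrightarrow> \<bar>v - u\<bar> < \<delta> \<Longrightarrow> \<rho> v \<le> of_int p / q"
proof -
  have "x + of_int p - (F u ^^ q) x > 0" using lt by simp
  from iter_continuous_parameter[OF u this, where k = q and x = x] obtain \<delta> where \<delta>: "\<delta> > 0"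
    "\<forall>v\<in>{u1..u2}. \<bar>v - u\<bar> < \<delta> \<longrightarrow> \<bar>(F v ^^ q) x - (F u ^^ q) x\<bar> < x + of_int p - (F u ^^ q) x"
    by blast
  have "\<rho> v \<le> of_int p / q" if "v \<in> {u1..u2}" "\<bar>v - u\<bar> < \<delta>" for v
    using circle_lift.rotnum_le_if_iter_le[OF circle_lift_member[OF that(1)] \<open>q > 0\<close>, of x p]
      \<delta>(2) that by fastforce
  then show thesis using that \<delta>(1) by blast
qed

lemma continuous_on_rotnum: "continuous_on {u1..u2} \<rho>"
  unfolding continuous_on_iff
proof (intro ballI allI impI)
  fix u e :: real assume u: "u \<in> {u1..u2}" and e: "e > 0"
  interpret circle_lift "F u" using circle_lift_member[OF u] .
  obtain q :: nat where q_gt: "1 / e < q" using reals_Archimedean2 by blast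
  moreover have "0 < 1 / e" using e by simp
  ultimately have "0 < real q" by linarith
  then have q: "q > 0" "1 / q < e" using q_gt e by (simp_all add: divide_less_eq pos_divide_less_eq mult.commute)
  define pU pL where "pU = \<lfloor>q * \<rho> u\<rfloor> + 1" and "pL = \<lceil>q * \<rho> u\<rceil> - 1"
  have int_bounds: "q * \<rho> u < of_int pU" "of_int pU \<le> q * \<rho> u + 1"
    "of_int pL < q * \<rho> u" "q * \<rho> u - 1 \<le> of_int pL"
    unfolding pU_def pL_def using floor_correct[of "q * \<rho> u"] ceiling_correct[of "q * \<rho> u"] by simp_all
  have "of_int pU / q \<le> (q * \<rho> u + 1) / q" "(q * \<rho> u - 1) / q \<le> of_int pL / q"
    using int_bounds by (simp_all add: divide_right_mono)
  then have pU: "\<rho> u < of_int pU / q" "of_int pU / q \<le> \<rho> u + 1 / q"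
    and pL: "of_int pL / q < \<rho> u" "\<rho> u - 1 / q \<le> of_int pL / q"
    using q(1) int_bounds
    by (simp_all add: add_divide_distrib diff_divide_distrib pos_less_divide_eq pos_divide_less_eq mult.commute)
  have "(F u ^^ q) 0 < 0 + of_int pU" using rotnum_ge_if_iter_ge[OF q(1), of 0 pU] pU(1) by fastforce
  then obtain \<delta>U where \<delta>U: "\<delta>U > 0" "\<And>v. v \<in> {u1..u2} \<Longrightarrow> \<bar>v - u\<bar> < \<delta>U \<Longrightarrow> \<rho> v \<le> of_int pU / q"
    using rotnum_le_near[OF u q(1)] by blast
  have "0 + of_int pL < (F u ^^ q) 0" using rotnum_le_if_iter_le[OF q(1), of 0 pL] pL(1) by fastforce
  then obtain \<delta>L where \<delta>L: "\<delta>L > 0" "\<And>v. v \<in> {u1..u2} \<Longrightarrow> \<bar>v - u\<bar> < \<delta>L \<Longrightarrow> of_int pL / q \<le> \<rho> v"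
    using rotnum_ge_near[OF u q(1)] by blast
  have "dist (\<rho> v) (\<rho> u) < e" if "v \<in> {u1..u2}" "dist v u < min \<delta>U \<delta>L" for v
    using \<delta>U(2)[of v] \<delta>L(2)[of v] that pU pL q(2) by (simp add: dist_real_def abs_less_iff)
  then show "\<exists>d>0. \<forall>v\<in>{u1..u2}. dist v u < d \<longrightarrow> dist (\<rho> v) (\<rho> u) < e"
    using \<delta>U(1) \<delta>L(1) by (intro exI[of _ "min \<delta>U \<delta>L"]) auto
qed

lemma plateau_at_odd_rational:
  assumes ab: "u1 \<le> a" "a < u" "u < b" "b \<le> u2" and rot: "\<rho> u = of_int p / real q" and "odd q"
  obtains \<alpha> \<beta> where "a \<le> \<alpha>" "\<alpha> < \<beta>" "\<beta> \<le> b" "\<And>w. w \<in> {\<alpha>..\<beta>} \<Longrightarrow> \<rho> w = \<rho> u"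
proof -
  have u: "u \<in> {u1..u2}" using ab by simp
  have q: "q > 0" using \<open>odd q\<close> by (simp add: odd_pos)
  obtain L a0 m0 where "trapezoid_lift (F u) L a0 m0" using trapezoid_lift_member[OF u] .
  then obtain x where x: "(F u ^^ q) x \<noteq> x + of_int p"
    using trapezoid_lift.iter_odd_not_translation[OF _ \<open>odd q\<close>] by blast
  show thesis
  proof (cases "x + of_int p < (F u ^^ q) x")
    case True
    obtain \<delta> where \<delta>: "\<delta> > 0" "\<And>v. v \<in> {u1..u2} \<Longrightarrow> \<bar>v - u\<bar> < \<delta> \<Longrightarrow> of_int p / q \<le> \<rho> v"
      using rotnum_ge_near[OF u q True] by blast
    define v where "v = max a (u - \<delta> / 2)"
    have v: "a \<le> v" "v < u" "v \<in> {u1..u2}" "\<bar>v - u\<bar> < \<delta>" using ab \<delta>(1) by (auto simp: v_def)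
    have "\<rho> v \<le> \<rho> u" using mono_onD[OF mono_on_rotnum v(3) u] v(2) by simp
    then have "\<rho> v = \<rho> u" using \<delta>(2)[OF v(3,4)] rot by simp
    show thesis
    proof (rule that[OF v(1,2)])
      show "u \<le> b" using ab by simp
      show "\<rho> w = \<rho> u" if "w \<in> {v..u}" for w
        using rotnum_eq_between[OF v(3) u, of w] that \<open>\<rho> v = \<rho> u\<close> by simp
    qed
  next
    case False
    then have "(F u ^^ q) x < x + of_int p" using x by simp
    then obtain \<delta> where \<delta>: "\<delta> > 0" "\<And>v. v \<in> {u1..u2} \<Longrightarrow> \<bar>v - u\<bar> < \<delta> \<Longrightarrow> \<rho> v \<le> of_int p / q"
      using rotnum_le_near[OF u q] by blast
    define v where "v = min b (u + \<delta> / 2)"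
    have v: "v \<le> b" "u < v" "v \<in> {u1..u2}" "\<bar>v - u\<bar> < \<delta>" using ab \<delta>(1) by (auto simp: v_def)
    have "\<rho> u \<le> \<rho> v" using mono_onD[OF mono_on_rotnum u v(3)] v(2) by simp
    then have "\<rho> u = \<rho> v" using \<delta>(2)[OF v(3,4)] rot by simp
    show thesis
    proof (rule that[OF _ v(2,1)])
      show "a \<le> u" using ab by simp
      show "\<rho> w = \<rho> u" if "w \<in> {u..v}" for w
        using rotnum_eq_between[OF u v(3), of w] that \<open>\<rho> u = \<rho> v\<close> by simp
    qed
  qed
qed

lemma plateau_with_value:
  assumes ab: "u1 \<le> a" "a < b" "b \<le> u2" and c: "\<rho> a < c" "c < \<rho> b"
    and cq: "c = of_int p / real q" and "odd q"
  obtains \<alpha> \<beta> where "a \<le> \<alpha>" "\<alpha> < \<beta>" "\<beta> \<le> b" "\<And>w. w \<in> {\<alpha>..\<beta>} \<Longrightarrow> \<rho> w = c"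
proof -
  have "continuous_on {a..b} \<rho>" using continuous_on_rotnum by (rule continuous_on_subset) (use ab in auto)
  then obtain u where u: "a \<le> u" "u \<le> b" "\<rho> u = c" using IVT'[of \<rho> a c b] ab c by auto
  then have "a < u" "u < b" using c by (auto simp: order.order_iff_strict)
  then obtain \<alpha> \<beta> where "a \<le> \<alpha>" "\<alpha> < \<beta>" "\<beta> \<le> b" "\<And>w. w \<in> {\<alpha>..\<beta>} \<Longrightarrow> \<rho> w = \<rho> u"
    using plateau_at_odd_rational[OF ab(1) _ _ ab(3)] u(3) cq \<open>odd q\<close> by blast
  then show thesis using that u(3) by blast
qed

lemma plateau_in_interval:
  assumes ab: "u1 \<le> a" "a < b" "b \<le> u2"
  obtains \<alpha> \<beta> c where "a \<le> \<alpha>" "\<alpha> < \<beta>" "\<beta> \<le> b" "\<And>w. w \<in> {\<alpha>..\<beta>} \<Longrightarrow> \<rho> w = c"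
proof (cases "\<rho> a = \<rho> b")
  case True
  show thesis
  proof (rule that[OF order.refl ab(2) order.refl])
    show "\<rho> w = \<rho> a" if "w \<in> {a..b}" for w
      using rotnum_eq_between[of a b w] that ab True by simp
  qed
next
  case False
  then have gap: "\<rho> b - \<rho> a > 0" using mono_onD[OF mono_on_rotnum, of a b] ab by auto
  obtain N :: nat where "1 / (\<rho> b - \<rho> a) < N" using reals_Archimedean2 by blast
  define q :: nat where "q = 2 * N + 1"
  have qpos: "real q > 0" by (simp add: q_def)
  have "1 / (\<rho> b - \<rho> a) < q" using \<open>1 / (\<rho> b - \<rho> a) < N\<close> by (simp add: q_def)
  then have q: "1 / q < \<rho> b - \<rho> a" using gap qpos by (simp add: field_simps)
  define p where "p = \<lfloor>q * \<rho> a\<rfloor> + 1"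
  have int_bounds: "q * \<rho> a < of_int p" "of_int p \<le> q * \<rho> a + 1"
    unfolding p_def using floor_correct[of "q * \<rho> a"] by simp_all
  then have "of_int p / q \<le> (q * \<rho> a + 1) / q" by (simp add: divide_right_mono)
  then have "\<rho> a < of_int p / q" "of_int p / q < \<rho> b"
    using int_bounds(1) q qpos by (simp_all add: pos_less_divide_eq add_divide_distrib mult.commute)
  moreover have "odd q" by (simp add: q_def)
  ultimately obtain \<alpha> \<beta> where "a \<le> \<alpha>" "\<alpha> < \<beta>" "\<beta> \<le> b" "\<And>w. w \<in> {\<alpha>..\<beta>} \<Longrightarrow> \<rho> w = of_int p / q"
    using plateau_with_value[OF ab, of "of_int p / q" p q] by blast
  then show thesis by (rule that)
qed

lemma plateaus_dense:
  "{u1..u2} \<subseteq> closure (\<Union>{{a..b} | a b. u1 \<le> a \<and> a < b \<and> b \<le> u2 \<and> (\<exists>c. \<forall>w\<in>{a..b}. \<rho> w = c)})"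
proof
  fix x assume x: "x \<in> {u1..u2}"
  show "x \<in> closure (\<Union>{{a..b} | a b. u1 \<le> a \<and> a < b \<and> b \<le> u2 \<and> (\<exists>c. \<forall>w\<in>{a..b}. \<rho> w = c)})"
    unfolding closure_approachable
  proof (intro allI impI)
    fix e :: real assume e: "e > 0"
    define a b where "a = max u1 (x - e / 2)" and "b = min u2 (x + e / 2)"
    have ab: "u1 \<le> a" "a < b" "b \<le> u2" using x e u1_less_u2 by (auto simp: a_def b_def)
    obtain \<alpha> \<beta> c where plateau: "a \<le> \<alpha>" "\<alpha> < \<beta>" "\<beta> \<le> b" "\<And>w. w \<in> {\<alpha>..\<beta>} \<Longrightarrow> \<rho> w = c"
      using plateau_in_interval[OF ab] by blast
    then have "\<alpha> \<in> \<Union>{{a..b} | a b. u1 \<le> a \<and> a < b \<and> b \<le> u2 \<and> (\<exists>c. \<forall>w\<in>{a..b}. \<rho> w = c)}"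
      using ab by (intro UnionI[of "{\<alpha>..\<beta>}"]) auto
    moreover have "dist \<alpha> x < e" using plateau ab e x by (auto simp: a_def b_def dist_real_def)
    ultimately show "\<exists>y\<in>\<Union>{{a..b} | a b. u1 \<le> a \<and> a < b \<and> b \<le> u2 \<and> (\<exists>c. \<forall>w\<in>{a..b}. \<rho> w = c)}.
      dist y x < e" by blast
  qed
qed

lemma plateau_value_rational:
  assumes ab: "u1 \<le> a" "a < b" "b \<le> u2" and const: "\<And>w. w \<in> {a..b} \<Longrightarrow> \<rho> w = c"
  shows "c \<in> \<rat>"
proof -
  define u where "u = (a + b) / 2"
  have in_I: "a \<in> {u1..u2}" "u \<in> {u1..u2}" "b \<in> {u1..u2}" using ab by (auto simp: u_def)
  have lifts: "circle_lift (F a)" "circle_lift (F u)" "circle_lift (F b)"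
    using circle_lift_member in_I by blast+
  have rot: "\<rho> a = c" "\<rho> u = c" "\<rho> b = c" using const ab by (auto simp: u_def)
  have "a < u" "u < b" using ab by (auto simp: u_def)
  then have "F a x < F u x" "F u x < F b x" for x using strict_incr in_I by auto
  then obtain \<delta>1 \<delta>2 where \<delta>1: "\<delta>1 > 0" "\<And>x. F a x + \<delta>1 \<le> F u x"
    and \<delta>2: "\<delta>2 > 0" "\<And>x. F u x + \<delta>2 \<le> F b x"
    using circle_lift_uniformly_less[OF lifts(1,2)] circle_lift_uniformly_less[OF lifts(2,3)] by metis
  interpret G: circle_lift "F u" by (fact lifts(2))
  have "min \<delta>1 \<delta>2 > 0" using \<delta>1(1) \<delta>2(1) by simp
  then obtain m k x where m: "m > 0" and near: "\<bar>(F u ^^ m) x - (x + of_int k)\<bar> < min \<delta>1 \<delta>2"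
    by (rule G.iter_near_translation)
  then have near: "\<bar>(F u ^^ m) x - (x + of_int k)\<bar> < \<delta>1" "\<bar>(F u ^^ m) x - (x + of_int k)\<bar> < \<delta>2"
    by simp_all
  have "c = of_int k / m"
  proof (cases "(F u ^^ m) x \<le> x + of_int k")
    case True
    have "(F u ^^ m) x + \<delta>2 \<le> (F b ^^ m) x"
      using iter_add_le_iter[OF lifts(3) \<delta>2(2)] \<delta>2(1) m by simp
    then have "x + of_int k \<le> (F b ^^ m) x" using near(2) by linarith
    then have "of_int k / m \<le> \<rho> b" using circle_lift.rotnum_ge_if_iter_ge[OF lifts(3) m] by blast
    moreover have "\<rho> u \<le> of_int k / m" using G.rotnum_le_if_iter_le[OF m True] .
    ultimately show ?thesis using rot by simp
  next
    case False
    have "(F a ^^ m) x + \<delta>1 \<le> (F u ^^ m) x"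
      using iter_add_le_iter[OF lifts(2) \<delta>1(2)] \<delta>1(1) m by simp
    then have "(F a ^^ m) x \<le> x + of_int k" using near(1) by linarith
    then have "\<rho> a \<le> of_int k / m" using circle_lift.rotnum_le_if_iter_le[OF lifts(1) m] by blast
    moreover have "x + of_int k \<le> (F u ^^ m) x" using False by simp
    then have "of_int k / m \<le> \<rho> u" by (rule G.rotnum_ge_if_iter_ge[OF m])
    ultimately show ?thesis using rot by simp
  qed
  then show ?thesis by (simp add: Rats_divide)
qed

lemma plateau_value_not_even_denominator:
  assumes ab: "u1 \<le> a" "a < b" "b \<le> u2" and const: "\<And>w. w \<in> {a..b} \<Longrightarrow> \<rho> w = c"
    and "n \<ge> 1" "coprime P (2 * int n)" and c: "c = of_int P / real (2 * n)"
  shows False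
proof -
  have in_I: "a \<in> {u1..u2}" "b \<in> {u1..u2}" using ab by auto
  obtain L a0 m0 where "trapezoid_lift (F a) L a0 m0" using trapezoid_lift_member[OF in_I(1)] .
  then have "trapezoid_lift_even_rotnum (F a) L a0 m0 n P"
    using assms const[of a] ab
    by (intro trapezoid_lift_even_rotnum.intro trapezoid_lift_even_rotnum_axioms.intro) auto
  then interpret trapezoid_lift_even_rotnum "F a" L a0 m0 n P .
  have lift_b: "circle_lift (F b)" using circle_lift_member[OF in_I(2)] .
  have "F a x < F b x" for x using strict_incr in_I ab by auto
  then obtain \<delta> where \<delta>: "\<delta> > 0" "\<And>x. F a x + \<delta> \<le> F b x"
    using circle_lift_uniformly_less[OF circle_lift_member[OF in_I(1)] lift_b] by metis
  have "x + (of_int P + \<delta>) \<le> (F b ^^ (2 * n)) x" for x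
  proof -
    have "(F a ^^ (2 * n)) x + \<delta> \<le> (F b ^^ (2 * n)) x"
      using iter_add_le_iter[OF lift_b \<delta>(2)] \<delta>(1) \<open>n \<ge> 1\<close> by simp
    then show ?thesis using iter_translation[of x] by simp
  qed
  moreover have "2 * n > 0" using \<open>n \<ge> 1\<close> by simp
  ultimately have "(of_int P + \<delta>) / real (2 * n) \<le> \<rho> b"
    using circle_lift.rotnum_ge_if_iter_ge_everywhere[OF lift_b] by blast
  moreover have "of_int P / real (2 * n) < (of_int P + \<delta>) / real (2 * n)"
    using \<delta>(1) \<open>n \<ge> 1\<close> by (simp add: divide_strict_right_mono)
  ultimately show False using const[of b] ab c by simp
qed

lemma plateau_value_odd_denominator:
  assumes ab: "u1 \<le> a" "a < b" "b \<le> u2" and const: "\<And>w. w \<in> {a..b} \<Longrightarrow> \<rho> w = c"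
  shows "c = 0 \<or> (\<exists>p q :: int. coprime p q \<and> odd q \<and> c = of_int p / of_int q)"
proof -
  obtain P Q :: int where PQ: "Q > 0" "coprime P Q" "c = of_int P / of_int Q"
    using plateau_value_rational[OF ab const] by (rule Rats_cases')
  show ?thesis
  proof (cases "odd Q")
    case False
    then obtain Q' where Q: "Q = 2 * Q'" by (auto elim: evenE)
    then have "Q' > 0" using PQ(1) by simp
    define n where "n = nat Q'"
    have "n \<ge> 1" using \<open>Q' > 0\<close> by (simp add: n_def)
    moreover have "Q = 2 * int n" using Q \<open>Q' > 0\<close> by (simp add: n_def)
    ultimately have "n \<ge> 1" "coprime P (2 * int n)" "c = of_int P / real (2 * n)" using PQ by auto
    then show ?thesis using plateau_value_not_even_denominator[OF ab const] by blast
  qed (use PQ in blast)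
qed

lemma rotnum_onto: "\<forall>r\<in>{\<rho> u1..\<rho> u2}. \<exists>u\<in>{u1..u2}. \<rho> u = r"
proof
  fix r assume "r \<in> {\<rho> u1..\<rho> u2}"
  then obtain u where "u1 \<le> u" "u \<le> u2" "\<rho> u = r"
    using IVT'[of \<rho> u1 r u2] continuous_on_rotnum u1_less_u2 by auto
  then show "\<exists>u\<in>{u1..u2}. \<rho> u = r" by auto
qed

lemma plateau_at_odd_denominator:
  assumes "\<rho> u1 < c" "c < \<rho> u2" and "c = 0 \<or> (\<exists>p q :: int. coprime p q \<and> odd q \<and> c = of_int p / of_int q)"
  shows "\<exists>a b. u1 \<le> a \<and> a < b \<and> b \<le> u2 \<and> (\<forall>u\<in>{a..b}. \<rho> u = c)"
proof -
  have "\<exists>p q :: int. odd q \<and> c = of_int p / of_int q"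
  proof (cases "c = 0")
    case True
    then show ?thesis by (intro exI[of _ 0] exI[of _ 1]) simp
  qed (use assms(3) in blast)
  then obtain p and q :: nat where "odd q" "c = of_int p / real q" by (metis odd_denominator_nat)
  then obtain \<alpha> \<beta> where "u1 \<le> \<alpha>" "\<alpha> < \<beta>" "\<beta> \<le> u2" "\<And>w. w \<in> {\<alpha>..\<beta>} \<Longrightarrow> \<rho> w = c"
    using plateau_with_value[OF order.refl u1_less_u2 order.refl assms(1,2)] by metis
  then show ?thesis by blast
qed

end

theorem theorem3p3:
  fixes F :: "real \<Rightarrow> real \<Rightarrow> real" and u1 u2 :: real
  assumes "u1 < u2"
    and type: "\<forall>u\<in>{u1..u2}. trap_lift (F u)"
    and cont: "\<forall>u\<in>{u1..u2}. \<forall>\<epsilon>>0. \<exists>\<delta>>0. \<forall>v\<in>{u1..u2}.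
                 \<bar>v - u\<bar> < \<delta> \<longrightarrow> (\<forall>x. \<bar>F v x - F u x\<bar> \<le> \<epsilon>)"
    and incr: "\<forall>x. \<forall>u\<in>{u1..u2}. \<forall>v\<in>{u1..u2}. u < v \<longrightarrow> F u x < F v x"
    and rho12: "rotnum (F u1) < rotnum (F u2)"
  shows "mono_on {u1..u2} (\<lambda>u. rotnum (F u))
    \<and> continuous_on {u1..u2} (\<lambda>u. rotnum (F u))
    \<and> (\<exists>u\<in>{u1..u2}. \<exists>v\<in>{u1..u2}. rotnum (F u) \<noteq> rotnum (F v))
    \<and> (\<exists>\<I>. \<I> \<subseteq> {{a..b} | a b. u1 \<le> a \<and> a < b \<and> b \<le> u2}
          \<and> (\<forall>I\<in>\<I>. \<exists>c. \<forall>u\<in>I. rotnum (F u) = c)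
          \<and> {u1..u2} \<subseteq> closure (\<Union>\<I>))
    \<and> (\<forall>r\<in>{rotnum (F u1)..rotnum (F u2)}. \<exists>u\<in>{u1..u2}. rotnum (F u) = r)
    \<and> (\<forall>a b c. u1 \<le> a \<and> a < b \<and> b \<le> u2 \<and> (\<forall>u\<in>{a..b}. rotnum (F u) = c) \<longrightarrow>
          c = 0 \<or> (\<exists>p q :: int. coprime p q \<and> odd q \<and> c = of_int p / of_int q))
    \<and> (\<forall>c. rotnum (F u1) < c \<and> c < rotnum (F u2) \<and>
          (c = 0 \<or> (\<exists>p q :: int. coprime p q \<and> odd q \<and> c = of_int p / of_int q)) \<longrightarrow>
          (\<exists>a b. u1 \<le> a \<and> a < b \<and> b \<le> u2 \<and> (\<forall>u\<in>{a..b}. rotnum (F u) = c)))"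
proof -
  interpret trapezoid_family F u1 u2 using assms by unfold_locales
  define \<I> where "\<I> = {{a..b} | a b. u1 \<le> a \<and> a < b \<and> b \<le> u2 \<and> (\<exists>c. \<forall>w\<in>{a..b}. rotnum (F w) = c)}"
  have "\<I> \<subseteq> {{a..b} | a b. u1 \<le> a \<and> a < b \<and> b \<le> u2}" "\<forall>I\<in>\<I>. \<exists>c. \<forall>u\<in>I. rotnum (F u) = c"
    "{u1..u2} \<subseteq> closure (\<Union>\<I>)"
    using plateaus_dense unfolding \<I>_def by blast+
  moreover have "\<exists>u\<in>{u1..u2}. \<exists>v\<in>{u1..u2}. \<rho> u \<noteq> \<rho> v"
    using rho12 \<open>u1 < u2\<close> by (intro bexI[of _ u1] bexI[of _ u2]) auto
  moreover have "\<forall>a b c. u1 \<le> a \<and> a < b \<and> b \<le> u2 \<and> (\<forall>u\<in>{a..b}. \<rho> u = c) \<longrightarrow>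
      c = 0 \<or> (\<exists>p q :: int. coprime p q \<and> odd q \<and> c = of_int p / of_int q)"
    using plateau_value_odd_denominator by blast
  moreover have "\<forall>c. \<rho> u1 < c \<and> c < \<rho> u2 \<and>
      (c = 0 \<or> (\<exists>p q :: int. coprime p q \<and> odd q \<and> c = of_int p / of_int q)) \<longrightarrow>
      (\<exists>a b. u1 \<le> a \<and> a < b \<and> b \<le> u2 \<and> (\<forall>u\<in>{a..b}. \<rho> u = c))"
    using plateau_at_odd_denominator by blast
  ultimately show ?thesis using mono_on_rotnum continuous_on_rotnum rotnum_onto by blast
qed

end
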